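(* Let $A$ be a commutative ring. Then there is an exact sequence of abelian groups $$0\longrightarrow \mathfrak{C}(A)\longrightarrow \mathfrak{C}(A_{\mathrm{red}})\longrightarrow \mathfrak{C}\big(T(A)_{\mathrm{red}},T(A_{\mathrm{red}})\big),$$ where $T(A)_{\mathrm{red}}$ is regarded as a subring of $T(A_{\mathrm{red}})$ via the injective map induced by $a/s\mapsto (a+\mathfrak N)/(s+\mathfrak N)$ ($\mathfrak N$ the nilradical of $A$), the first map is induced by the ring map $T(A)\to T(A_{\mathrm{red}})$, $a/s\mapsto (a+\mathfrak N)/(s+\mathfrak N)$, and the second map is induced by $L\mapsto L\,T(A)_{\mathrm{red}}$ for the tower $A_{\mathrm{red}}\subseteq T(A)_{\mathrm{red}}\subseteq T(A_{\mathrm{red}})$.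
   Context: All rings are commutative with identity; $R_{\mathrm{red}}$ is $R$ modulo its nilradical, and $T(R)$ is the total ring of fractions of $R$. For an extension of rings $R\subseteq S$ and $R$-submodules $L,L'$ of $S$, $LL'$ is the $R$-submodule of finite sums $\sum x_ky_k$. An $R$-submodule $L$ of $S$ is an invertible ideal of $R\subseteq S$ if $LL'=R$ for some $R$-submodule $L'$ of $S$; these form an abelian group $\mathscr{G}(R,S)$ and $\mathfrak{C}(R,S)=\mathscr{G}(R,S)/\{Rx:x\in S^\ast\}$. Also $\mathfrak{C}(R)=\mathfrak{C}(R,T(R))$. A morphism of extensions $\phi:(R,S)\to(R',S')$ (a ring map $\phi:S\to S'$ with $\phi(R)\subseteq R'$) induces $\mathfrak{C}(R,S)\to\mathfrak{C}(R',S')$ via $L\mapsto \phi(L)R'$. *)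

theory Defs
  imports "HOL-Algebra.Algebra"
begin

definition nilradical :: "('a, 'm) ring_scheme \<Rightarrow> 'a set" where
  "nilradical R = {a \<in> carrier R. \<exists>n::nat. a [^]\<^bsub>R\<^esub> n = \<zero>\<^bsub>R\<^esub>}"

definition reduced_ring :: "('a, 'm) ring_scheme \<Rightarrow> 'a set ring" where
  "reduced_ring R = R Quot nilradical R"

definition nzd :: "('a, 'm) ring_scheme \<Rightarrow> 'a set" where
  "nzd R = {s \<in> carrier R. \<forall>a \<in> carrier R. a \<otimes>\<^bsub>R\<^esub> s = \<zero>\<^bsub>R\<^esub> \<longrightarrow> a = \<zero>\<^bsub>R\<^esub>}"

(* (T, i) is a total ring of fractions of R: T is (up to isomorphism) the
   localization of R at its set of non-zero-divisors, with i : R -> T the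
   canonical (injective) map a |-> a/1. *)
definition total_ring_of_fractions ::
    "('a, 'm) ring_scheme \<Rightarrow> ('b, 'n) ring_scheme \<Rightarrow> ('a \<Rightarrow> 'b) \<Rightarrow> bool" where
  "total_ring_of_fractions R T i \<longleftrightarrow>
     cring T \<and> i \<in> ring_hom R T \<and> inj_on i (carrier R) \<and>
     (\<forall>s \<in> nzd R. i s \<in> Units T) \<and>
     (\<forall>x \<in> carrier T. \<exists>a \<in> carrier R. \<exists>s \<in> nzd R. x = i a \<otimes>\<^bsub>T\<^esub> inv\<^bsub>T\<^esub> (i s))"

(* Extension R \<subseteq> S, where R is a subset (subring) of carrier S. *)

definition rsubmodule :: "('b, 'n) ring_scheme \<Rightarrow> 'b set \<Rightarrow> 'b set \<Rightarrow> bool" where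
  "rsubmodule S R L \<longleftrightarrow> L \<subseteq> carrier S \<and> \<zero>\<^bsub>S\<^esub> \<in> L \<and>
     (\<forall>x \<in> L. \<forall>y \<in> L. x \<oplus>\<^bsub>S\<^esub> y \<in> L) \<and>
     (\<forall>x \<in> L. \<ominus>\<^bsub>S\<^esub> x \<in> L) \<and>
     (\<forall>r \<in> R. \<forall>x \<in> L. r \<otimes>\<^bsub>S\<^esub> x \<in> L)"

definition ideal_prod :: "('b, 'n) ring_scheme \<Rightarrow> 'b set \<Rightarrow> 'b set \<Rightarrow> 'b set" where
  "ideal_prod S L L' = {finsum S (\<lambda>k. f k \<otimes>\<^bsub>S\<^esub> g k) {..<(n::nat)} | n f g.
                     (\<forall>k<n. f k \<in> L \<and> g k \<in> L')}"

definition invertible_ideals :: "('b, 'n) ring_scheme \<Rightarrow> 'b set \<Rightarrow> 'b set set" where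
  "invertible_ideals S R =
     {L. rsubmodule S R L \<and> (\<exists>L'. rsubmodule S R L' \<and> ideal_prod S L L' = R)}"

definition inv_group :: "('b, 'n) ring_scheme \<Rightarrow> 'b set \<Rightarrow> 'b set monoid" where
  "inv_group S R = \<lparr>carrier = invertible_ideals S R, monoid.mult = ideal_prod S, monoid.one = R\<rparr>"

definition principal_ideals :: "('b, 'n) ring_scheme \<Rightarrow> 'b set \<Rightarrow> 'b set set" where
  "principal_ideals S R = {(\<lambda>r. r \<otimes>\<^bsub>S\<^esub> x) ` R | x. x \<in> Units S}"

definition class_group :: "('b, 'n) ring_scheme \<Rightarrow> 'b set \<Rightarrow> 'b set set monoid" where
  "class_group S R = inv_group S R Mod principal_ideals S R"

definition ideal_class :: "('b, 'n) ring_scheme \<Rightarrow> 'b set \<Rightarrow> 'b set \<Rightarrow> 'b set set" where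
  "ideal_class S R L = principal_ideals S R #>\<^bsub>inv_group S R\<^esub> L"

definition induced_ideal :: "('c, 'o) ring_scheme \<Rightarrow> 'c set \<Rightarrow> ('b \<Rightarrow> 'c) \<Rightarrow> 'b set \<Rightarrow> 'c set" where
  "induced_ideal S' R' \<phi> L = ideal_prod S' (\<phi> ` L) R'"

end

(*
  The reduction map h : T(A) -> T(A_red) has a nil kernel, and i(A) contains the inverse of
  1 + r for each of its nilpotent elements r.  For every ring map h : R -> S with these two
  properties relative to a subring K of R, the sequence C(K, R) -> C(h K, S) -> C(h R, S) is
  exact and its first map is injective.

  Injectivity: if h(L) = h(K) h(x) with x in L, splitting 1 = sum f_k g_k along L L' = K gives
  w in L' with x w = 1 - s for a nilpotent s in K, so x is a unit and L = K x.

  Exactness: twisting L by a principal ideal gives L h(R) = h(R), so L and L' lie in h(R), and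
  a dual basis 1 = sum f_k g_k lifts to x_k, y_k in R.  The products x_l y_k lie in K only
  modulo an ideal J generated by finitely many kernel elements, which is nilpotent.  The matrix
  P = (x_l y_k) is idempotent, and the Newton corrections x - e x, y - y e (e the J-part of P)
  move its entries into K + J^(r+1); after finitely many steps they lie in K, and the
  K-submodule generated by the corrected x_k is an invertible ideal lifting L.
*)
theory Submission
  imports Defs
begin

section \<open>Nilpotent elements\<close>

definition listprod :: "('b, 'n) ring_scheme \<Rightarrow> 'b list \<Rightarrow> 'b" where
  "listprod S xs = foldr (\<lambda>x y. x \<otimes>\<^bsub>S\<^esub> y) xs \<one>\<^bsub>S\<^esub>"

definition power_ideal :: "('b, 'n) ring_scheme \<Rightarrow> 'b set \<Rightarrow> nat \<Rightarrow> 'b set" where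
  "power_ideal S E r = genideal S {listprod S xs | xs. set xs \<subseteq> E \<and> r \<le> length xs}"

context cring
begin

lemma listprod_Nil [simp]: "listprod R [] = \<one>"
  by (simp add: listprod_def)

lemma listprod_Cons [simp]: "listprod R (x # xs) = x \<otimes> listprod R xs"
  by (simp add: listprod_def)

lemma listprod_closed [simp]: "set xs \<subseteq> carrier R \<Longrightarrow> listprod R xs \<in> carrier R"
  by (induction xs) auto

lemma listprod_append:
  "set xs \<subseteq> carrier R \<Longrightarrow> set ys \<subseteq> carrier R \<Longrightarrow>
    listprod R (xs @ ys) = listprod R xs \<otimes> listprod R ys"
  by (induction xs) (auto simp: m_assoc)

lemma listprod_count_factor:
  assumes "set xs \<subseteq> carrier R" "x \<in> carrier R"
  shows "listprod R xs = x [^] count_list xs x \<otimes> listprod R (filter (\<lambda>y. y \<noteq> x) xs)"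
  using assms
proof (induction xs)
  case (Cons y xs)
  then have "set (filter (\<lambda>y. y \<noteq> x) xs) \<subseteq> carrier R" by auto
  with Cons show ?case
    by (cases "y = x") (auto simp: nat_pow_Suc2 m_assoc m_lcomm)
qed simp

lemma nat_pow_zero_mono:
  assumes "x \<in> carrier R" "x [^] (m::nat) = \<zero>" "m \<le> k"
  shows "x [^] k = \<zero>"
proof -
  have "x [^] m \<otimes> x [^] (k - m) = x [^] k"
    using nat_pow_mult[of x m "k - m"] assms(1,3) by simp
  with assms(1,2) show ?thesis by simp
qed

text \<open>A product of more than \<open>card E * p\<close> factors from \<open>E\<close> repeats some factor \<open>p\<close> times.\<close>

lemma listprod_eq_zero:
  assumes E: "E \<subseteq> carrier R" "finite E" and p: "\<And>e. e \<in> E \<Longrightarrow> e [^] (p::nat) = \<zero>"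
    and xs: "set xs \<subseteq> E" "card E * p < length xs"
  shows "listprod R xs = \<zero>"
proof -
  have "\<exists>x\<in>E. p \<le> count_list xs x"
  proof (rule ccontr)
    assume "\<not> ?thesis"
    then have "sum (count_list xs) E \<le> card E * p"
      using sum_mono[of E "count_list xs" "\<lambda>_. p"] by fastforce
    moreover have "sum (count_list xs) E = length xs"
      using sum_count_set xs E by blast
    ultimately show False using xs by simp
  qed
  then obtain x where x: "x \<in> E" "p \<le> count_list xs x" by blast
  have "x [^] count_list xs x = \<zero>"
    using nat_pow_zero_mono[OF _ p x(2)] x E by auto
  moreover have "set xs \<subseteq> carrier R" using xs E by auto
  moreover have "listprod R (filter (\<lambda>y. y \<noteq> x) xs) \<in> carrier R"
    using calculation(2) by (intro listprod_closed) auto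
  ultimately show ?thesis
    using listprod_count_factor[of xs x] x E by auto
qed

lemma power_ideal_is_ideal: "E \<subseteq> carrier R \<Longrightarrow> ideal (power_ideal R E r) R"
  unfolding power_ideal_def by (rule genideal_ideal) auto

lemma listprod_in_power_ideal:
  assumes "E \<subseteq> carrier R" "set xs \<subseteq> E" "r \<le> length xs"
  shows "listprod R xs \<in> power_ideal R E r"
proof -
  have "{listprod R xs | xs. set xs \<subseteq> E \<and> r \<le> length xs} \<subseteq> carrier R"
    using assms(1) by (auto intro!: listprod_closed)
  from genideal_self[OF this] show ?thesis
    unfolding power_ideal_def using assms by blast
qed

lemma power_ideal_carrier: "E \<subseteq> carrier R \<Longrightarrow> power_ideal R E r \<subseteq> carrier R"
  using ideal.Icarr[OF power_ideal_is_ideal] by blast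

lemma power_ideal_antimono:
  assumes "E \<subseteq> carrier R" "r \<le> s"
  shows "power_ideal R E s \<subseteq> power_ideal R E r"
  unfolding power_ideal_def[of _ _ s]
  using assms listprod_in_power_ideal[OF assms(1)]
  by (intro genideal_minimal[OF power_ideal_is_ideal]) auto

lemma quotient_ideal_is_ideal:
  assumes I: "ideal I R" and y: "y \<in> carrier R"
  shows "ideal {x \<in> carrier R. x \<otimes> y \<in> I} R"
proof (rule idealI)
  show "subgroup {x \<in> carrier R. x \<otimes> y \<in> I} (add_monoid R)"
  proof (rule add.subgroupI)
    have "\<zero> \<in> {x \<in> carrier R. x \<otimes> y \<in> I}"
      using y additive_subgroup.zero_closed[OF ideal.axioms(1)[OF I]] by simp
    then show "{x \<in> carrier R. x \<otimes> y \<in> I} \<noteq> {}" by blast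
  qed (use y I in \<open>auto simp: l_minus l_distr additive_subgroup.a_inv_closed
      additive_subgroup.a_closed ideal.axioms(1)\<close>)
next
  fix a x assume a: "a \<in> {x \<in> carrier R. x \<otimes> y \<in> I}" and x: "x \<in> carrier R"
  then have "x \<otimes> (a \<otimes> y) \<in> I" using ideal.I_l_closed[OF I] by simp
  moreover have "x \<otimes> a \<otimes> y = x \<otimes> (a \<otimes> y)" "a \<otimes> x \<otimes> y = x \<otimes> (a \<otimes> y)"
    using a x y by (simp_all add: m_ac)
  ultimately show "x \<otimes> a \<in> {x \<in> carrier R. x \<otimes> y \<in> I}" "a \<otimes> x \<in> {x \<in> carrier R. x \<otimes> y \<in> I}"
    using a x by auto
qed (rule ring_axioms)

lemma power_ideal_mult:
  assumes E: "E \<subseteq> carrier R" and a: "a \<in> power_ideal R E r" and b: "b \<in> power_ideal R E s"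
  shows "a \<otimes> b \<in> power_ideal R E (r + s)"
proof -
  let ?I = "power_ideal R E (r + s)"
  have I: "ideal ?I R" using power_ideal_is_ideal E by blast
  have gens: "listprod R xs \<otimes> listprod R ys \<in> ?I"
    if "set xs \<subseteq> E" "r \<le> length xs" "set ys \<subseteq> E" "s \<le> length ys" for xs ys
    using that E listprod_in_power_ideal[OF E, of "xs @ ys"] listprod_append[of xs ys] by auto
  have a_gen: "a \<otimes> listprod R ys \<in> ?I" if ys: "set ys \<subseteq> E" "s \<le> length ys" for ys
  proof -
    have "power_ideal R E r \<subseteq> {x \<in> carrier R. x \<otimes> listprod R ys \<in> ?I}"
      unfolding power_ideal_def[of _ _ r] using gens ys E
      by (intro genideal_minimal quotient_ideal_is_ideal[OF I]) auto
    then show ?thesis using a by auto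
  qed
  have ac: "a \<in> carrier R" using a power_ideal_carrier E by auto
  have "power_ideal R E s \<subseteq> {y \<in> carrier R. y \<otimes> a \<in> ?I}"
    unfolding power_ideal_def[of _ _ s] using a_gen E ac
    by (intro genideal_minimal quotient_ideal_is_ideal[OF I ac]) (auto simp: m_comm)
  then show ?thesis using b ac m_comm by auto
qed

lemma power_ideal_eq_zero:
  assumes E: "E \<subseteq> carrier R" "finite E" and p: "\<And>e. e \<in> E \<Longrightarrow> e [^] (p::nat) = \<zero>"
  shows "power_ideal R E (Suc (card E * p)) = {\<zero>}"
proof -
  have "power_ideal R E (Suc (card E * p)) \<subseteq> {\<zero>}"
    unfolding power_ideal_def using listprod_eq_zero[OF E p]
    by (intro genideal_minimal zeroideal) auto
  moreover have "\<zero> \<in> power_ideal R E (Suc (card E * p))"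
    using power_ideal_is_ideal[OF E(1)] additive_subgroup.zero_closed ideal.axioms(1) by blast
  ultimately show ?thesis by auto
qed

lemma generator_in_power_ideal: "E \<subseteq> carrier R \<Longrightarrow> e \<in> E \<Longrightarrow> e \<in> power_ideal R E 1"
  using listprod_in_power_ideal[of E "[e]" 1] by auto

lemma power_ideal_nat_pow:
  "E \<subseteq> carrier R \<Longrightarrow> x \<in> power_ideal R E 1 \<Longrightarrow> x [^] (k::nat) \<in> power_ideal R E k"
proof (induction k)
  case 0
  then show ?case using listprod_in_power_ideal[of E "[]" 0] by simp
next
  case (Suc k)
  then show ?case using power_ideal_mult[of E "x [^] k" k x 1] by simp
qed

lemma power_ideal_nilpotent:
  assumes E: "E \<subseteq> carrier R" "finite E" and p: "\<And>e. e \<in> E \<Longrightarrow> e [^] (p::nat) = \<zero>"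
    and x: "x \<in> power_ideal R E 1"
  shows "x [^] (Suc (card E * p)) = \<zero>"
  using power_ideal_nat_pow[OF E(1) x] power_ideal_eq_zero[OF E p] by blast

lemma nilpotent_mult:
  assumes "x \<in> carrier R" "x [^] (m::nat) = \<zero>" "a \<in> carrier R"
  shows "(a \<otimes> x) [^] m = \<zero>"
  using assms pow_mult_distrib[of a x m] m_comm by simp

lemma nilpotent_neg:
  assumes "x \<in> carrier R" "x [^] (m::nat) = \<zero>"
  shows "(\<ominus> x) [^] m = \<zero>"
  using nilpotent_mult[OF assms, of "\<ominus> \<one>"] assms by (simp add: l_minus)

lemma nilpotent_add:
  assumes x: "x \<in> carrier R" "x [^] (m::nat) = \<zero>" and y: "y \<in> carrier R" "y [^] (m'::nat) = \<zero>"
  shows "\<exists>k::nat. (x \<oplus> y) [^] k = \<zero>"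
proof -
  have E: "{x, y} \<subseteq> carrier R" "finite {x, y}" using x y by auto
  have p: "e [^] (m + m') = \<zero>" if "e \<in> {x, y}" for e
    using that nat_pow_zero_mono x y by auto
  have "x \<oplus> y \<in> power_ideal R {x, y} 1"
    using generator_in_power_ideal[OF E(1)] power_ideal_is_ideal[OF E(1)]
    by (simp add: additive_subgroup.a_closed ideal.axioms(1))
  then show ?thesis using power_ideal_nilpotent[OF E p] by blast
qed

lemma nilpotent_common_exponent:
  assumes "finite E" "E \<subseteq> carrier R" "\<And>e. e \<in> E \<Longrightarrow> \<exists>m::nat. e [^] m = \<zero>"
  shows "\<exists>p::nat. \<forall>e\<in>E. e [^] p = \<zero>"
  using assms
proof (induction E rule: finite_induct)
  case (insert x F)
  then obtain p :: nat where p: "\<forall>e\<in>F. e [^] p = \<zero>" by blast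
  obtain m :: nat where "x [^] m = \<zero>" using insert.prems by blast
  then have "\<forall>e\<in>insert x F. e [^] (p + m) = \<zero>"
    using p insert.prems(1) nat_pow_zero_mono[of _ p "p + m"] nat_pow_zero_mono[of x m "p + m"]
    by auto
  then show ?case by blast
qed simp

lemma geometric_sum:
  "y \<in> carrier R \<Longrightarrow> (\<one> \<ominus> y) \<otimes> (\<Oplus>i\<in>{..<(m::nat)}. y [^] i) = \<one> \<ominus> y [^] m"
proof (induction m)
  case (Suc m)
  have "(\<Oplus>i\<in>{..<Suc m}. y [^] i) = y [^] m \<oplus> (\<Oplus>i\<in>{..<m}. y [^] i)"
    using Suc by (simp add: lessThan_Suc finsum_insert)
  moreover have "(\<Oplus>i\<in>{..<m}. y [^] i) \<in> carrier R" "y [^] m \<in> carrier R"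
    using Suc by (auto intro: finsum_closed)
  moreover have "(\<one> \<ominus> y) \<otimes> y [^] m \<oplus> (\<one> \<ominus> y [^] m) = \<one> \<ominus> y [^] m \<otimes> y"
    using Suc calculation(3) by algebra
  ultimately show ?case
    using Suc by (simp add: nat_pow_Suc r_distr)
qed (simp add: minus_eq r_neg)

lemma one_plus_nilpotent_Units:
  assumes x: "x \<in> carrier R" and m: "x [^] (m::nat) = \<zero>"
  shows "\<one> \<oplus> x \<in> Units R"
proof -
  let ?s = "\<Oplus>i\<in>{..<m}. (\<ominus> x) [^] i"
  have s: "?s \<in> carrier R" using x by (intro finsum_closed) auto
  have "(\<one> \<ominus> \<ominus> x) \<otimes> ?s = \<one>"
    using geometric_sum[of "\<ominus> x" m] nilpotent_neg[OF x m] x by (simp add: minus_eq)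
  then have "(\<one> \<oplus> x) \<otimes> ?s = \<one>" using x by (simp add: minus_eq)
  moreover have "?s \<otimes> (\<one> \<oplus> x) = (\<one> \<oplus> x) \<otimes> ?s" using s x m_comm by simp
  ultimately show ?thesis using s x unfolding Units_def by force
qed

lemma nilradical_ideal: "ideal (nilradical R) R"
proof (rule idealI)
  show "subgroup (nilradical R) (add_monoid R)"
  proof (rule add.subgroupI)
    have "\<zero> [^] (1::nat) = \<zero>" by simp
    then show "nilradical R \<noteq> {}" unfolding nilradical_def by blast
  qed (auto simp: nilradical_def dest: nilpotent_neg nilpotent_add)
next
  fix a x assume "a \<in> nilradical R" "x \<in> carrier R"
  then show "x \<otimes> a \<in> nilradical R" "a \<otimes> x \<in> nilradical R"
    unfolding nilradical_def using nilpotent_mult m_comm by auto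
qed (rule ring_axioms)

end

section \<open>Products of submodules\<close>

context cring
begin

lemma ideal_prod_iff:
  "z \<in> ideal_prod R U V \<longleftrightarrow>
    (\<exists>n f g. z = (\<Oplus>k\<in>{..<(n::nat)}. f k \<otimes> g k) \<and> (\<forall>k<n. f k \<in> U \<and> g k \<in> V))"
  unfolding ideal_prod_def by blast

lemma zero_in_ideal_prod: "\<zero> \<in> ideal_prod R U V"
  unfolding ideal_prod_iff by (rule exI[of _ 0]) simp

lemma ideal_prod_add_mult:
  assumes UV: "U \<subseteq> carrier R" "V \<subseteq> carrier R"
    and a: "a \<in> ideal_prod R U V" and x: "x \<in> U" and y: "y \<in> V"
  shows "a \<oplus> x \<otimes> y \<in> ideal_prod R U V"
proof -
  obtain n :: nat and f g where a: "a = (\<Oplus>k\<in>{..<n}. f k \<otimes> g k)" and fg: "\<forall>k<n. f k \<in> U \<and> g k \<in> V"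
    using a unfolding ideal_prod_iff by blast
  let ?f = "f(n := x)" and ?g = "g(n := y)"
  have closed: "(\<lambda>k. f k \<otimes> g k) \<in> {..<n} \<rightarrow> carrier R"
      "(\<lambda>k. ?f k \<otimes> ?g k) \<in> {..<n} \<rightarrow> carrier R" "x \<otimes> y \<in> carrier R"
    using fg x y UV by (auto simp: subsetD)
  have "(\<Oplus>k\<in>{..<Suc n}. ?f k \<otimes> ?g k) = x \<otimes> y \<oplus> (\<Oplus>k\<in>{..<n}. ?f k \<otimes> ?g k)"
    using closed by (simp add: lessThan_Suc finsum_insert)
  also have "(\<Oplus>k\<in>{..<n}. ?f k \<otimes> ?g k) = a"
    unfolding a using closed by (intro finsum_cong) auto
  finally have "(\<Oplus>k\<in>{..<Suc n}. ?f k \<otimes> ?g k) = a \<oplus> x \<otimes> y"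
    using closed a by (simp add: a_comm finsum_closed)
  moreover have "\<forall>k<Suc n. ?f k \<in> U \<and> ?g k \<in> V" using fg x y by auto
  ultimately show ?thesis unfolding ideal_prod_iff by metis
qed

lemma ideal_prod_induct [consumes 3, case_names zero add_mult]:
  assumes UV: "U \<subseteq> carrier R" "V \<subseteq> carrier R" and z: "z \<in> ideal_prod R U V"
    and zero: "P \<zero>"
    and add_mult: "\<And>a x y. a \<in> ideal_prod R U V \<Longrightarrow> P a \<Longrightarrow> x \<in> U \<Longrightarrow> y \<in> V \<Longrightarrow> P (a \<oplus> x \<otimes> y)"
  shows "P z"
proof -
  obtain n :: nat and f g where z: "z = (\<Oplus>k\<in>{..<n}. f k \<otimes> g k)" and fg: "\<forall>k<n. f k \<in> U \<and> g k \<in> V"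
    using z unfolding ideal_prod_iff by blast
  have "\<forall>k<n. f k \<in> U \<and> g k \<in> V \<Longrightarrow>
    (\<Oplus>k\<in>{..<n}. f k \<otimes> g k) \<in> ideal_prod R U V \<and> P (\<Oplus>k\<in>{..<n}. f k \<otimes> g k)"
  proof (induction n)
    case 0
    then show ?case using zero zero_in_ideal_prod by simp
  next
    case (Suc n)
    have "(\<lambda>k. f k \<otimes> g k) \<in> {..<n} \<rightarrow> carrier R" "f n \<otimes> g n \<in> carrier R"
      using Suc.prems UV by (auto simp: subsetD)
    then have "(\<Oplus>k\<in>{..<Suc n}. f k \<otimes> g k) = (\<Oplus>k\<in>{..<n}. f k \<otimes> g k) \<oplus> f n \<otimes> g n"
      by (simp add: lessThan_Suc finsum_insert a_comm finsum_closed)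
    then show ?case using Suc add_mult ideal_prod_add_mult[OF UV] by simp
  qed
  then show ?thesis using fg z by simp
qed

lemma ideal_prod_minimal:
  assumes "U \<subseteq> carrier R" "V \<subseteq> carrier R" "\<zero> \<in> W"
    and "\<And>a b. a \<in> W \<Longrightarrow> b \<in> W \<Longrightarrow> a \<oplus> b \<in> W"
    and "\<And>x y. x \<in> U \<Longrightarrow> y \<in> V \<Longrightarrow> x \<otimes> y \<in> W"
  shows "ideal_prod R U V \<subseteq> W"
proof
  fix z assume "z \<in> ideal_prod R U V"
  with assms(1,2) show "z \<in> W" by (induction rule: ideal_prod_induct) (use assms in auto)
qed

lemma ideal_prod_carrier:
  "U \<subseteq> carrier R \<Longrightarrow> V \<subseteq> carrier R \<Longrightarrow> ideal_prod R U V \<subseteq> carrier R"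
  by (rule ideal_prod_minimal) (auto simp: subsetD)

lemma mult_in_ideal_prod:
  assumes "U \<subseteq> carrier R" "V \<subseteq> carrier R" "x \<in> U" "y \<in> V"
  shows "x \<otimes> y \<in> ideal_prod R U V"
  using ideal_prod_add_mult[OF assms(1,2) zero_in_ideal_prod assms(3,4)] assms by (simp add: subsetD)

lemma ideal_prod_add_closed:
  assumes UV: "U \<subseteq> carrier R" "V \<subseteq> carrier R"
    and a: "a \<in> ideal_prod R U V" and b: "b \<in> ideal_prod R U V"
  shows "a \<oplus> b \<in> ideal_prod R U V"
  using UV b
proof (induction rule: ideal_prod_induct)
  case zero
  then show ?case using a ideal_prod_carrier[OF UV] by auto
next
  case (add_mult c x y)
  have "a \<oplus> (c \<oplus> x \<otimes> y) = (a \<oplus> c) \<oplus> x \<otimes> y"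
    using a add_mult UV ideal_prod_carrier[OF UV] by (simp add: a_assoc subsetD)
  then show ?case using ideal_prod_add_mult[OF UV add_mult.IH add_mult.hyps(2,3)] by simp
qed

lemma ideal_prod_mono: "U \<subseteq> U' \<Longrightarrow> V \<subseteq> V' \<Longrightarrow> ideal_prod R U V \<subseteq> ideal_prod R U' V'"
  unfolding ideal_prod_def by blast

lemma ideal_prod_comm:
  assumes "U \<subseteq> carrier R" "V \<subseteq> carrier R"
  shows "ideal_prod R U V = ideal_prod R V U"
proof -
  have "ideal_prod R U V \<subseteq> ideal_prod R V U"
    if UV: "U \<subseteq> carrier R" "V \<subseteq> carrier R" for U V
  proof (rule ideal_prod_minimal)
    show "x \<otimes> y \<in> ideal_prod R V U" if "x \<in> U" "y \<in> V" for x y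
      using mult_in_ideal_prod[OF UV(2,1) that(2,1)] m_comm[of x y] that UV by (auto simp: subsetD)
  qed (use UV zero_in_ideal_prod ideal_prod_add_closed in auto)
  then show ?thesis using assms by blast
qed

lemma ideal_prod_mult_assoc:
  assumes UVW: "U \<subseteq> carrier R" "V \<subseteq> carrier R" "W \<subseteq> carrier R"
  shows "ideal_prod R (ideal_prod R U V) W = ideal_prod R U (ideal_prod R V W)"
proof -
  have sub: "ideal_prod R (ideal_prod R U V) W \<subseteq> ideal_prod R U (ideal_prod R V W)"
    if UVW: "U \<subseteq> carrier R" "V \<subseteq> carrier R" "W \<subseteq> carrier R" for U V W
  proof (rule ideal_prod_minimal)
    have VW: "ideal_prod R V W \<subseteq> carrier R" using ideal_prod_carrier UVW by auto
    show "w \<otimes> z \<in> ideal_prod R U (ideal_prod R V W)" if "w \<in> ideal_prod R U V" "z \<in> W" for w z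
      using UVW(1,2) that(1)
    proof (induction rule: ideal_prod_induct)
      case (add_mult a x y)
      have "(a \<oplus> x \<otimes> y) \<otimes> z = a \<otimes> z \<oplus> x \<otimes> (y \<otimes> z)"
        using add_mult that UVW ideal_prod_carrier[of U V] by (simp add: l_distr m_assoc subsetD)
      moreover have "y \<otimes> z \<in> ideal_prod R V W" using mult_in_ideal_prod UVW add_mult that by auto
      ultimately show ?case using ideal_prod_add_mult[OF UVW(1) VW add_mult.IH add_mult.hyps(2)] by simp
    qed (use that UVW in \<open>auto simp: subsetD zero_in_ideal_prod\<close>)
  qed (use UVW ideal_prod_carrier ideal_prod_add_closed zero_in_ideal_prod in auto)
  have c: "ideal_prod R P Q \<subseteq> carrier R" if "P \<subseteq> carrier R" "Q \<subseteq> carrier R" for P Q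
    using ideal_prod_carrier that by blast
  have "ideal_prod R U (ideal_prod R V W) = ideal_prod R (ideal_prod R W V) U"
    using ideal_prod_comm UVW c by metis
  also have "\<dots> \<subseteq> ideal_prod R W (ideal_prod R V U)" using sub UVW by blast
  also have "\<dots> = ideal_prod R (ideal_prod R U V) W"
    using ideal_prod_comm UVW c by metis
  finally show ?thesis using sub[OF UVW] by blast
qed

lemma ideal_prod_swap:
  assumes "A \<subseteq> carrier R" "B \<subseteq> carrier R" "C \<subseteq> carrier R" "D \<subseteq> carrier R"
  shows "ideal_prod R (ideal_prod R A B) (ideal_prod R C D) =
    ideal_prod R (ideal_prod R A C) (ideal_prod R B D)"
proof -
  have c: "ideal_prod R P Q \<subseteq> carrier R" if "P \<subseteq> carrier R" "Q \<subseteq> carrier R" for P Q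
    using ideal_prod_carrier that by blast
  have "ideal_prod R (ideal_prod R A B) (ideal_prod R C D) =
      ideal_prod R A (ideal_prod R (ideal_prod R B C) D)"
    using assms c by (simp add: ideal_prod_mult_assoc)
  also have "ideal_prod R B C = ideal_prod R C B" using ideal_prod_comm assms by simp
  finally show ?thesis using assms c by (simp add: ideal_prod_mult_assoc)
qed

lemma rsubmodule_carrier: "rsubmodule R K L \<Longrightarrow> L \<subseteq> carrier R"
  unfolding rsubmodule_def by auto

lemma rsubmodule_ideal_prod:
  assumes K: "K \<subseteq> carrier R" and U: "rsubmodule R K U" and V: "V \<subseteq> carrier R"
  shows "rsubmodule R K (ideal_prod R U V)"
proof -
  have Uc: "U \<subseteq> carrier R" using U rsubmodule_carrier by blast
  have C: "ideal_prod R U V \<subseteq> carrier R" using ideal_prod_carrier Uc V by auto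
  have neg: "\<ominus> z \<in> ideal_prod R U V" if "z \<in> ideal_prod R U V" for z
    using Uc V that
  proof (induction rule: ideal_prod_induct)
    case (add_mult a x y)
    have "\<ominus> (a \<oplus> x \<otimes> y) = \<ominus> a \<oplus> (\<ominus> x) \<otimes> y"
      using add_mult C Uc V by (simp add: minus_add l_minus subsetD)
    moreover have "\<ominus> x \<in> U" using U add_mult unfolding rsubmodule_def by auto
    ultimately show ?case using ideal_prod_add_mult[OF Uc V add_mult.IH _ add_mult.hyps(3)] by simp
  qed (simp add: zero_in_ideal_prod)
  have smult: "r \<otimes> z \<in> ideal_prod R U V" if r: "r \<in> K" and "z \<in> ideal_prod R U V" for r z
    using Uc V that(2)
  proof (induction rule: ideal_prod_induct)
    case (add_mult a x y)
    have "r \<otimes> (a \<oplus> x \<otimes> y) = r \<otimes> a \<oplus> (r \<otimes> x) \<otimes> y"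
      using add_mult C Uc V r K by (simp add: r_distr m_assoc subsetD)
    moreover have "r \<otimes> x \<in> U" using U r add_mult unfolding rsubmodule_def by auto
    ultimately show ?case using ideal_prod_add_mult[OF Uc V add_mult.IH _ add_mult.hyps(3)] by simp
  qed (use r K in \<open>auto simp: subsetD zero_in_ideal_prod\<close>)
  show ?thesis
    unfolding rsubmodule_def using C zero_in_ideal_prod ideal_prod_add_closed[OF Uc V] neg smult
    by blast
qed

lemma rsubmodule_ideal_prod_right:
  "K \<subseteq> carrier R \<Longrightarrow> U \<subseteq> carrier R \<Longrightarrow> rsubmodule R K V \<Longrightarrow> rsubmodule R K (ideal_prod R U V)"
  using rsubmodule_ideal_prod ideal_prod_comm rsubmodule_carrier by metis

lemma rsubmodule_subring: "subring K R \<Longrightarrow> subring K' R \<Longrightarrow> K \<subseteq> K' \<Longrightarrow> rsubmodule R K K'"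
  using subringE[of K' R] unfolding rsubmodule_def by (auto simp: subsetD)

lemma ideal_prod_subring_left:
  assumes K: "subring K R" and U: "rsubmodule R K U"
  shows "ideal_prod R K U = U"
proof
  have Kc: "K \<subseteq> carrier R" "\<one> \<in> K" and Uc: "U \<subseteq> carrier R"
    using subringE[OF K] rsubmodule_carrier[OF U] by auto
  show "ideal_prod R K U \<subseteq> U"
    using U Kc by (intro ideal_prod_minimal) (auto simp: rsubmodule_def)
  show "U \<subseteq> ideal_prod R K U"
    using mult_in_ideal_prod[OF Kc(1) Uc Kc(2)] Uc by (auto simp: subsetD)
qed

lemma ideal_prod_subring_right:
  "subring K R \<Longrightarrow> rsubmodule R K U \<Longrightarrow> ideal_prod R U K = U"
  using ideal_prod_subring_left ideal_prod_comm rsubmodule_carrier subringE(1) by metis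

lemma ideal_prod_subring_self: "subring K R \<Longrightarrow> ideal_prod R K K = K"
  using ideal_prod_subring_left rsubmodule_subring by blast

lemma ring_hom_image_ideal_prod:
  assumes R': "cring R'" and h: "h \<in> ring_hom R R'" and UV: "U \<subseteq> carrier R" "V \<subseteq> carrier R"
  shows "h ` ideal_prod R U V = ideal_prod R' (h ` U) (h ` V)"
proof
  interpret R': cring R' by fact
  have hUV: "h ` U \<subseteq> carrier R'" "h ` V \<subseteq> carrier R'"
    using UV ring_hom_closed[OF h] by auto
  show "h ` ideal_prod R U V \<subseteq> ideal_prod R' (h ` U) (h ` V)"
  proof
    fix w assume "w \<in> h ` ideal_prod R U V"
    then obtain z where z: "z \<in> ideal_prod R U V" "w = h z" by auto
    from UV z(1) have "h z \<in> ideal_prod R' (h ` U) (h ` V)"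
    proof (induction rule: ideal_prod_induct)
      case (add_mult a x y)
      have "h (a \<oplus> x \<otimes> y) = h a \<oplus>\<^bsub>R'\<^esub> h x \<otimes>\<^bsub>R'\<^esub> h y"
        using add_mult UV ideal_prod_carrier[OF UV] h by (simp add: subsetD ring_hom_add ring_hom_mult)
      then show ?case using R'.ideal_prod_add_mult[OF hUV add_mult.IH] add_mult by simp
    qed (simp add: ring_hom_zero[OF h ring_axioms R'.ring_axioms] R'.zero_in_ideal_prod)
    then show "w \<in> ideal_prod R' (h ` U) (h ` V)" using z by simp
  qed
  show "ideal_prod R' (h ` U) (h ` V) \<subseteq> h ` ideal_prod R U V"
  proof (rule R'.ideal_prod_minimal[OF hUV])
    show "\<zero>\<^bsub>R'\<^esub> \<in> h ` ideal_prod R U V"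
      using zero_in_ideal_prod ring_hom_zero[OF h ring_axioms R'.ring_axioms]
      by (auto intro!: image_eqI[of _ _ \<zero>])
    show "a \<oplus>\<^bsub>R'\<^esub> b \<in> h ` ideal_prod R U V" if "a \<in> h ` ideal_prod R U V" "b \<in> h ` ideal_prod R U V" for a b
      using that ideal_prod_add_closed[OF UV] ideal_prod_carrier[OF UV] h
      by (auto simp: subsetD ring_hom_add[symmetric])
    show "x \<otimes>\<^bsub>R'\<^esub> y \<in> h ` ideal_prod R U V" if "x \<in> h ` U" "y \<in> h ` V" for x y
      using that mult_in_ideal_prod[OF UV] UV h by (auto simp: subsetD ring_hom_mult[symmetric])
  qed
qed

end

section \<open>The group of invertible ideals\<close>

context cring
begin

lemma inv_group_simps [simp]:
  "carrier (inv_group R K) = invertible_ideals R K"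
  "monoid.mult (inv_group R K) = ideal_prod R"
  "one (inv_group R K) = K"
  unfolding inv_group_def by simp_all

lemma invertible_ideal_rsubmodule: "L \<in> invertible_ideals R K \<Longrightarrow> rsubmodule R K L"
  unfolding invertible_ideals_def by auto

lemma invertible_ideal_carrier: "L \<in> invertible_ideals R K \<Longrightarrow> L \<subseteq> carrier R"
  unfolding invertible_ideals_def rsubmodule_def by auto

lemma comm_group_inv_group:
  assumes K: "subring K R"
  shows "comm_group (inv_group R K)"
proof (rule comm_groupI)
  have Kc: "K \<subseteq> carrier R" using subringE(1)[OF K] .
  show "L \<otimes>\<^bsub>inv_group R K\<^esub> M \<in> carrier (inv_group R K)"
    if LM: "L \<in> carrier (inv_group R K)" "M \<in> carrier (inv_group R K)" for L M
  proof -
    obtain L' M' where L: "rsubmodule R K L" "rsubmodule R K L'" "ideal_prod R L L' = K"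
      and M: "rsubmodule R K M" "rsubmodule R K M'" "ideal_prod R M M' = K"
      using LM unfolding inv_group_simps invertible_ideals_def by auto
    have "ideal_prod R (ideal_prod R L M) (ideal_prod R L' M') = ideal_prod R K K"
      using ideal_prod_swap[of L M L' M'] rsubmodule_carrier L M by simp
    then have "ideal_prod R (ideal_prod R L M) (ideal_prod R L' M') = K"
      using ideal_prod_subring_self[OF K] by simp
    moreover have "rsubmodule R K (ideal_prod R L M)" "rsubmodule R K (ideal_prod R L' M')"
      using rsubmodule_ideal_prod[OF Kc] rsubmodule_carrier L M by simp_all
    ultimately show ?thesis unfolding inv_group_simps invertible_ideals_def by auto
  qed
  show "\<one>\<^bsub>inv_group R K\<^esub> \<in> carrier (inv_group R K)"
    using rsubmodule_subring[OF K K] ideal_prod_subring_self[OF K]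
    unfolding inv_group_simps invertible_ideals_def by blast
  show "L \<otimes>\<^bsub>inv_group R K\<^esub> M \<otimes>\<^bsub>inv_group R K\<^esub> N = L \<otimes>\<^bsub>inv_group R K\<^esub> (M \<otimes>\<^bsub>inv_group R K\<^esub> N)"
    if "L \<in> carrier (inv_group R K)" "M \<in> carrier (inv_group R K)" "N \<in> carrier (inv_group R K)"
    for L M N
    using that ideal_prod_mult_assoc invertible_ideal_carrier by simp
  show "L \<otimes>\<^bsub>inv_group R K\<^esub> M = M \<otimes>\<^bsub>inv_group R K\<^esub> L"
    if "L \<in> carrier (inv_group R K)" "M \<in> carrier (inv_group R K)" for L M
    using that ideal_prod_comm invertible_ideal_carrier by simp
  show "\<one>\<^bsub>inv_group R K\<^esub> \<otimes>\<^bsub>inv_group R K\<^esub> L = L" if "L \<in> carrier (inv_group R K)" for L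
    using that ideal_prod_subring_left[OF K] invertible_ideal_rsubmodule by simp
  show "\<exists>L'\<in>carrier (inv_group R K). L' \<otimes>\<^bsub>inv_group R K\<^esub> L = \<one>\<^bsub>inv_group R K\<^esub>"
    if L: "L \<in> carrier (inv_group R K)" for L
  proof -
    obtain L' where L: "rsubmodule R K L" "rsubmodule R K L'" "ideal_prod R L L' = K"
      using L unfolding inv_group_simps invertible_ideals_def by auto
    then have "ideal_prod R L' L = K" using ideal_prod_comm[of L L'] rsubmodule_carrier by simp
    with L show ?thesis unfolding inv_group_simps invertible_ideals_def by auto
  qed
qed

definition principal_ideal :: "'a set \<Rightarrow> 'a \<Rightarrow> 'a set" where
  "principal_ideal K x = (\<lambda>r. r \<otimes> x) ` K"

lemma principal_ideals_eq: "principal_ideals R K = {principal_ideal K x | x. x \<in> Units R}"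
  unfolding principal_ideals_def principal_ideal_def by simp

lemma rsubmodule_principal_ideal:
  assumes K: "subring K R" and x: "x \<in> carrier R"
  shows "rsubmodule R K (principal_ideal K x)"
proof -
  note KE = subringE[OF K]
  have "\<zero> \<in> principal_ideal K x"
    unfolding principal_ideal_def using KE x by (auto intro!: image_eqI[of _ _ \<zero>])
  moreover have "r \<otimes> x \<oplus> s \<otimes> x \<in> principal_ideal K x" if "r \<in> K" "s \<in> K" for r s
    unfolding principal_ideal_def using that KE x
    by (auto intro!: image_eqI[of _ _ "r \<oplus> s"] simp: l_distr subsetD)
  moreover have "\<ominus> (r \<otimes> x) \<in> principal_ideal K x" if "r \<in> K" for r
    unfolding principal_ideal_def using that KE x
    by (auto intro!: image_eqI[of _ _ "\<ominus> r"] simp: l_minus subsetD)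
  moreover have "k \<otimes> (r \<otimes> x) \<in> principal_ideal K x" if "k \<in> K" "r \<in> K" for k r
    unfolding principal_ideal_def using that KE x
    by (auto intro!: image_eqI[of _ _ "k \<otimes> r"] simp: m_assoc subsetD)
  moreover have "principal_ideal K x \<subseteq> carrier R"
    unfolding principal_ideal_def using KE x by auto
  ultimately show ?thesis
    unfolding rsubmodule_def by (auto simp: principal_ideal_def)
qed

lemma principal_ideal_one: "subring K R \<Longrightarrow> principal_ideal K \<one> = K"
  unfolding principal_ideal_def using subringE(1)[of K R] by (auto simp: subsetD image_def)

lemma ideal_prod_principal_ideal:
  assumes K: "subring K R" and K': "subring K' R" and KK': "K \<subseteq> K'"
    and x: "x \<in> carrier R" and y: "y \<in> carrier R"
  shows "ideal_prod R (principal_ideal K x) (principal_ideal K' y) = principal_ideal K' (x \<otimes> y)"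
proof
  note KE = subringE[OF K] and KE' = subringE[OF K']
  have c: "principal_ideal K x \<subseteq> carrier R" "principal_ideal K' y \<subseteq> carrier R"
    using rsubmodule_principal_ideal K K' x y rsubmodule_carrier by blast+
  have rs: "rsubmodule R K' (principal_ideal K' (x \<otimes> y))"
    using rsubmodule_principal_ideal K' x y by simp
  show "ideal_prod R (principal_ideal K x) (principal_ideal K' y) \<subseteq> principal_ideal K' (x \<otimes> y)"
  proof (rule ideal_prod_minimal[OF c])
    show "a \<otimes> b \<in> principal_ideal K' (x \<otimes> y)"
      if ab: "a \<in> principal_ideal K x" "b \<in> principal_ideal K' y" for a b
    proof -
      obtain r s where rs: "r \<in> K" "s \<in> K'" "a = r \<otimes> x" "b = s \<otimes> y"
        using ab unfolding principal_ideal_def by blast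
      then have "a \<otimes> b = (r \<otimes> s) \<otimes> (x \<otimes> y)" "r \<otimes> s \<in> K'"
        using KE KE' KK' x y by (auto simp: subsetD m_ac)
      then show ?thesis unfolding principal_ideal_def by auto
    qed
  qed (use rs in \<open>auto simp: rsubmodule_def\<close>)
  show "principal_ideal K' (x \<otimes> y) \<subseteq> ideal_prod R (principal_ideal K x) (principal_ideal K' y)"
  proof
    fix z assume "z \<in> principal_ideal K' (x \<otimes> y)"
    then obtain r where r: "r \<in> K'" "z = r \<otimes> (x \<otimes> y)" unfolding principal_ideal_def by auto
    have "\<one> \<otimes> x \<in> principal_ideal K x" "r \<otimes> y \<in> principal_ideal K' y"
      using r KE unfolding principal_ideal_def by auto
    moreover have "z = (\<one> \<otimes> x) \<otimes> (r \<otimes> y)" using r KE' x y by (simp add: subsetD m_ac)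
    ultimately show "z \<in> ideal_prod R (principal_ideal K x) (principal_ideal K' y)"
      using mult_in_ideal_prod[OF c] by simp
  qed
qed

lemma principal_ideal_extend:
  assumes "subring K R" "subring K' R" "K \<subseteq> K'" "y \<in> carrier R"
  shows "ideal_prod R (principal_ideal K y) K' = principal_ideal K' y"
  using ideal_prod_principal_ideal[OF assms one_closed] principal_ideal_one[OF assms(2)] assms(4) by simp

lemma principal_ideal_invertible:
  assumes K: "subring K R" and x: "x \<in> Units R"
  shows "principal_ideal K x \<in> invertible_ideals R K"
  using ideal_prod_principal_ideal[OF K K order_refl, of x "inv x"] principal_ideal_one[OF K]
    rsubmodule_principal_ideal[OF K] x
  unfolding invertible_ideals_def by (auto intro!: exI[of _ "principal_ideal K (inv x)"])

lemma subgroup_principal_ideals: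
  assumes K: "subring K R"
  shows "subgroup (principal_ideals R K) (inv_group R K)"
proof -
  interpret G: comm_group "inv_group R K" using comm_group_inv_group[OF K] .
  have mult: "principal_ideal K x \<otimes>\<^bsub>inv_group R K\<^esub> principal_ideal K y = principal_ideal K (x \<otimes> y)"
    if "x \<in> Units R" "y \<in> Units R" for x y
    using ideal_prod_principal_ideal[OF K K order_refl] that[THEN Units_closed] by simp
  show ?thesis
  proof (rule G.subgroupI)
    show "principal_ideals R K \<subseteq> carrier (inv_group R K)"
      unfolding principal_ideals_eq using principal_ideal_invertible[OF K] by auto
    show "principal_ideals R K \<noteq> {}" unfolding principal_ideals_eq by blast
  next
    fix P assume "P \<in> principal_ideals R K"
    then obtain x where x: "x \<in> Units R" "P = principal_ideal K x"
      unfolding principal_ideals_eq by auto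
    have "principal_ideal K (inv x) \<otimes>\<^bsub>inv_group R K\<^esub> P = \<one>\<^bsub>inv_group R K\<^esub>"
      using x mult[of "inv x" x] principal_ideal_one[OF K] by simp
    then have "inv\<^bsub>inv_group R K\<^esub> P = principal_ideal K (inv x)"
      using G.inv_equality principal_ideal_invertible[OF K] x by simp
    then show "inv\<^bsub>inv_group R K\<^esub> P \<in> principal_ideals R K"
      using x unfolding principal_ideals_eq by auto
  next
    fix P Q assume "P \<in> principal_ideals R K" "Q \<in> principal_ideals R K"
    then show "P \<otimes>\<^bsub>inv_group R K\<^esub> Q \<in> principal_ideals R K"
      unfolding principal_ideals_eq using mult by auto
  qed
qed

end

section \<open>Maps induced on quotient groups\<close>

locale quotient_hom =
  G: comm_group G + G': comm_group G' for G (structure) and G' +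
  fixes H H' \<psi>
  assumes subgroup: "subgroup H G" and subgroup': "subgroup H' G'"
    and hom: "\<psi> \<in> hom G G'" and image_subgroup: "\<psi> ` H \<subseteq> H'"
begin

definition qmap where
  "qmap Q = H' #>\<^bsub>G'\<^esub> \<psi> (SOME a. a \<in> carrier G \<and> Q = H #> a)"

lemma hom_closed: "a \<in> carrier G \<Longrightarrow> \<psi> a \<in> carrier G'"
  using hom unfolding hom_def by auto

lemma hom_mult: "a \<in> carrier G \<Longrightarrow> b \<in> carrier G \<Longrightarrow> \<psi> (a \<otimes> b) = \<psi> a \<otimes>\<^bsub>G'\<^esub> \<psi> b"
  using hom unfolding hom_def by auto

lemma hom_inv: "a \<in> carrier G \<Longrightarrow> \<psi> (inv a) = inv\<^bsub>G'\<^esub> \<psi> a"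
  using group_hom.hom_inv[of G G' \<psi>] hom G.is_group G'.is_group
  by (simp add: group_hom_def group_hom_axioms_def)

lemma qmap_rcos: "a \<in> carrier G \<Longrightarrow> qmap (H #> a) = H' #>\<^bsub>G'\<^esub> \<psi> a"
proof -
  assume a: "a \<in> carrier G"
  define b where "b = (SOME b. b \<in> carrier G \<and> H #> a = H #> b)"
  have "\<exists>b. b \<in> carrier G \<and> H #> a = H #> b" using a by blast
  then have b: "b \<in> carrier G" "H #> a = H #> b"
    unfolding b_def by (metis (mono_tags, lifting) someI_ex)+
  then have "a \<otimes> inv b \<in> H"
    using G.rcos_self[OF a subgroup] subgroup.rcos_module_imp[OF subgroup G.is_group] by simp
  then have "\<psi> a \<otimes>\<^bsub>G'\<^esub> inv\<^bsub>G'\<^esub> \<psi> b \<in> H'"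
    using image_subgroup a b hom_mult hom_inv by (metis G.inv_closed image_subset_iff)
  then have "\<psi> a \<in> H' #>\<^bsub>G'\<^esub> \<psi> b"
    using subgroup.rcos_module_rev[OF subgroup' G'.is_group] a b hom_closed by simp
  then have "H' #>\<^bsub>G'\<^esub> \<psi> b = H' #>\<^bsub>G'\<^esub> \<psi> a"
    using G'.repr_independence[OF _ _ subgroup'] b hom_closed by simp
  then show ?thesis unfolding qmap_def b_def by simp
qed

lemma qmap_hom: "qmap \<in> hom (G Mod H) (G' Mod H')"
proof (rule homI)
  fix Q assume "Q \<in> carrier (G Mod H)"
  then obtain a where "a \<in> carrier G" "Q = H #> a" by (auto simp: carrier_FactGroup)
  then show "qmap Q \<in> carrier (G' Mod H')"
    using qmap_rcos hom_closed by (simp add: carrier_FactGroup)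
next
  fix Q P assume "Q \<in> carrier (G Mod H)" "P \<in> carrier (G Mod H)"
  then obtain a b where ab: "a \<in> carrier G" "Q = H #> a" "b \<in> carrier G" "P = H #> b"
    by (auto simp: carrier_FactGroup)
  have "Q \<otimes>\<^bsub>G Mod H\<^esub> P = H #> (a \<otimes> b)"
    using ab normal.rcos_sum[OF G.subgroup_imp_normal[OF subgroup]] by simp
  then show "qmap (Q \<otimes>\<^bsub>G Mod H\<^esub> P) = qmap Q \<otimes>\<^bsub>G' Mod H'\<^esub> qmap P"
    using ab qmap_rcos hom_mult hom_closed normal.rcos_sum[OF G'.subgroup_imp_normal[OF subgroup']]
    by simp
qed

lemma qmap_inj_on:
  assumes "\<And>a. a \<in> carrier G \<Longrightarrow> \<psi> a \<in> H' \<Longrightarrow> a \<in> H"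
  shows "inj_on qmap (carrier (G Mod H))"
proof (rule inj_onI)
  fix Q P assume "Q \<in> carrier (G Mod H)" "P \<in> carrier (G Mod H)" and eq: "qmap Q = qmap P"
  then obtain a b where ab: "a \<in> carrier G" "Q = H #> a" "b \<in> carrier G" "P = H #> b"
    by (auto simp: carrier_FactGroup)
  then have "\<psi> a \<in> H' #>\<^bsub>G'\<^esub> \<psi> b"
    using eq qmap_rcos G'.rcos_self[OF hom_closed subgroup'] by metis
  then have "\<psi> (a \<otimes> inv b) \<in> H'"
    using subgroup.rcos_module_imp[OF subgroup' G'.is_group] ab hom_mult hom_inv hom_closed by simp
  then have "a \<in> H #> b"
    using assms subgroup.rcos_module_rev[OF subgroup G.is_group] ab by simp
  then show "Q = P" using G.repr_independence[OF _ _ subgroup] ab by metis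
qed

end

lemma quotient_hom_exact:
  assumes f: "quotient_hom G1 G2 H1 H2 \<psi>1" and g: "quotient_hom G2 G3 H2 H3 \<psi>2"
    and comp: "\<And>a. a \<in> carrier G1 \<Longrightarrow> \<psi>2 (\<psi>1 a) \<in> H3"
    and lift: "\<And>b. b \<in> carrier G2 \<Longrightarrow> \<psi>2 b \<in> H3 \<Longrightarrow> \<exists>a\<in>carrier G1. b \<in> H2 #>\<^bsub>G2\<^esub> \<psi>1 a"
  shows "quotient_hom.qmap G1 G2 H1 H2 \<psi>1 ` carrier (G1 Mod H1) =
    kernel (G2 Mod H2) (G3 Mod H3) (quotient_hom.qmap G2 G3 H2 H3 \<psi>2)"
proof -
  interpret f: quotient_hom G1 G2 H1 H2 \<psi>1 by (rule f)
  interpret g: quotient_hom G2 G3 H2 H3 \<psi>2 by (rule g)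
  have H3_rcos: "H3 #>\<^bsub>G3\<^esub> c = H3 \<longleftrightarrow> c \<in> H3" if "c \<in> carrier G3" for c
    using g.G'.rcos_self[OF that g.subgroup'] subgroup.rcos_const[OF g.subgroup' g.G'.is_group] by auto
  show ?thesis
  proof (intro equalityI subsetI)
    fix Y assume "Y \<in> f.qmap ` carrier (G1 Mod H1)"
    then obtain a where a: "a \<in> carrier G1" "Y = H2 #>\<^bsub>G2\<^esub> \<psi>1 a"
      by (auto simp: carrier_FactGroup f.qmap_rcos)
    then show "Y \<in> kernel (G2 Mod H2) (G3 Mod H3) g.qmap"
      using comp f.hom_closed g.hom_closed g.qmap_rcos H3_rcos
      by (auto simp: kernel_def carrier_FactGroup)
  next
    fix Y assume "Y \<in> kernel (G2 Mod H2) (G3 Mod H3) g.qmap"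
    then obtain b where b: "b \<in> carrier G2" "Y = H2 #>\<^bsub>G2\<^esub> b" "g.qmap Y = H3"
      by (auto simp: kernel_def carrier_FactGroup)
    then have "\<psi>2 b \<in> H3" using g.qmap_rcos H3_rcos g.hom_closed by simp
    then obtain a where a: "a \<in> carrier G1" "b \<in> H2 #>\<^bsub>G2\<^esub> \<psi>1 a" using lift b by blast
    then have "Y = f.qmap (H1 #>\<^bsub>G1\<^esub> a)"
      using b f.qmap_rcos f.G'.repr_independence[OF _ f.hom_closed f.subgroup'] by simp
    then show "Y \<in> f.qmap ` carrier (G1 Mod H1)"
      using a by (auto simp: carrier_FactGroup)
  qed
qed

section \<open>Maps induced by morphisms of extensions\<close>

context ring_hom_cring
begin

lemma hom_Units: "x \<in> Units R \<Longrightarrow> h x \<in> Units S \<and> h (inv x) = inv\<^bsub>S\<^esub> h x"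
proof -
  assume x: "x \<in> Units R"
  have "h x \<otimes>\<^bsub>S\<^esub> h (inv x) = \<one>\<^bsub>S\<^esub>" "h (inv x) \<otimes>\<^bsub>S\<^esub> h x = \<one>\<^bsub>S\<^esub>"
    using hom_mult[of x "inv x"] hom_mult[of "inv x" x] R.Units_closed[OF x] R.Units_inv_closed[OF x] x
    by auto
  moreover have "h x \<in> carrier S" "h (inv x) \<in> carrier S" using x by auto
  ultimately show ?thesis using S.inv_char by (auto simp: Units_def)
qed

lemma rsubmodule_image:
  assumes K: "subring K R" and L: "rsubmodule R K L"
  shows "rsubmodule S (h ` K) (h ` L)"
proof -
  have Lc: "L \<subseteq> carrier R" and Kc: "K \<subseteq> carrier R"
    using L K subringE(1) R.rsubmodule_carrier by auto
  have closed: "\<zero> \<in> L" "\<And>x y. x \<in> L \<Longrightarrow> y \<in> L \<Longrightarrow> x \<oplus> y \<in> L" "\<And>x. x \<in> L \<Longrightarrow> \<ominus> x \<in> L"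
    "\<And>r x. r \<in> K \<Longrightarrow> x \<in> L \<Longrightarrow> r \<otimes> x \<in> L"
    using L unfolding rsubmodule_def by auto
  have "\<zero>\<^bsub>S\<^esub> \<in> h ` L" using closed(1) imageI[of \<zero> L h] by simp
  moreover have "h x \<oplus>\<^bsub>S\<^esub> h y \<in> h ` L" if "x \<in> L" "y \<in> L" for x y
    using that Lc closed(2)[OF that] imageI[of "x \<oplus> y" L h] by (simp add: subsetD)
  moreover have "\<ominus>\<^bsub>S\<^esub> h x \<in> h ` L" if "x \<in> L" for x
    using that Lc closed(3)[OF that] imageI[of "\<ominus> x" L h] by (simp add: subsetD)
  moreover have "h r \<otimes>\<^bsub>S\<^esub> h x \<in> h ` L" if "r \<in> K" "x \<in> L" for r x
    using that Lc Kc closed(4)[OF that] imageI[of "r \<otimes> x" L h] by (simp add: subsetD)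
  ultimately show ?thesis
    using Lc unfolding rsubmodule_def by auto
qed

lemma induced_ideal_image:
  assumes K: "subring K R" and L: "rsubmodule R K L"
  shows "induced_ideal S (h ` K) h L = h ` L"
proof -
  have "induced_ideal S (h ` K) h L = h ` ideal_prod R L K"
    unfolding induced_ideal_def
    using R.ring_hom_image_ideal_prod[OF S.is_cring homh] R.rsubmodule_carrier[OF L] subringE(1)[OF K]
    by simp
  then show ?thesis using R.ideal_prod_subring_right[OF K L] by simp
qed

lemma induced_ideal_hom:
  assumes K: "subring K R"
  shows "induced_ideal S (h ` K) h \<in> hom (inv_group R K) (inv_group S (h ` K))"
proof (rule homI)
  fix L assume "L \<in> carrier (inv_group R K)"
  then obtain L' where L: "rsubmodule R K L" "rsubmodule R K L'" "ideal_prod R L L' = K"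
    unfolding R.inv_group_simps invertible_ideals_def by auto
  then have "ideal_prod S (h ` L) (h ` L') = h ` K"
    using R.ring_hom_image_ideal_prod[OF S.is_cring homh] R.rsubmodule_carrier by metis
  then show "induced_ideal S (h ` K) h L \<in> carrier (inv_group S (h ` K))"
    using L rsubmodule_image[OF K] induced_ideal_image[OF K]
    unfolding S.inv_group_simps invertible_ideals_def by auto
next
  fix L M assume LM: "L \<in> carrier (inv_group R K)" "M \<in> carrier (inv_group R K)"
  then have "L \<otimes>\<^bsub>inv_group R K\<^esub> M \<in> carrier (inv_group R K)"
    using comm_group.axioms(2)[OF R.comm_group_inv_group[OF K]] group.is_monoid monoid.m_closed by metis
  then show "induced_ideal S (h ` K) h (L \<otimes>\<^bsub>inv_group R K\<^esub> M) =
      induced_ideal S (h ` K) h L \<otimes>\<^bsub>inv_group S (h ` K)\<^esub> induced_ideal S (h ` K) h M"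
    using LM induced_ideal_image[OF K] R.invertible_ideal_rsubmodule R.invertible_ideal_carrier
      R.ring_hom_image_ideal_prod[OF S.is_cring homh]
    by simp
qed

lemma induced_ideal_principal:
  assumes K: "subring K R"
  shows "induced_ideal S (h ` K) h ` principal_ideals R K \<subseteq> principal_ideals S (h ` K)"
proof
  fix P assume "P \<in> induced_ideal S (h ` K) h ` principal_ideals R K"
  then obtain x where x: "x \<in> Units R" "P = induced_ideal S (h ` K) h (R.principal_ideal K x)"
    unfolding R.principal_ideals_eq by auto
  then have "P = h ` R.principal_ideal K x"
    using induced_ideal_image[OF K] R.rsubmodule_principal_ideal[OF K] by auto
  also have "\<dots> = S.principal_ideal (h ` K) (h x)"
    unfolding R.principal_ideal_def S.principal_ideal_def image_image
    using R.Units_closed[OF x(1)] subringE(1)[OF K] by (intro image_cong) (auto simp: subsetD)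
  finally show "P \<in> principal_ideals S (h ` K)"
    using hom_Units[OF x(1)] unfolding S.principal_ideals_eq by auto
qed

end

context cring
begin

lemma extension_hom:
  assumes K: "subring K R" and K': "subring K' R" and KK': "K \<subseteq> K'"
  shows "induced_ideal R K' id \<in> hom (inv_group R K) (inv_group R K')"
proof (rule homI)
  have K'c: "K' \<subseteq> carrier R" using subringE(1)[OF K'] .
  have K'K': "ideal_prod R K' K' = K'" and KK'_eq: "ideal_prod R K K' = K'"
    using ideal_prod_subring_self[OF K'] ideal_prod_subring_left[OF K rsubmodule_subring[OF K K' KK']]
    by simp_all
  fix L assume "L \<in> carrier (inv_group R K)"
  then obtain L' where L: "L \<subseteq> carrier R" "L' \<subseteq> carrier R" "ideal_prod R L L' = K"
    unfolding inv_group_simps invertible_ideals_def using rsubmodule_carrier by blast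
  then have "ideal_prod R (ideal_prod R L K') (ideal_prod R L' K') = K'"
    using ideal_prod_swap[OF L(1) K'c L(2) K'c] K'K' KK'_eq by simp
  moreover have "rsubmodule R K' (ideal_prod R P K')" if "P \<subseteq> carrier R" for P
    using rsubmodule_ideal_prod_right[OF K'c that rsubmodule_subring[OF K' K' order_refl]] .
  ultimately have "ideal_prod R L K' \<in> invertible_ideals R K'"
    using L unfolding invertible_ideals_def by blast
  then show "induced_ideal R K' id L \<in> carrier (inv_group R K')"
    unfolding induced_ideal_def by simp
next
  fix L M assume "L \<in> carrier (inv_group R K)" "M \<in> carrier (inv_group R K)"
  then show "induced_ideal R K' id (L \<otimes>\<^bsub>inv_group R K\<^esub> M) =
      induced_ideal R K' id L \<otimes>\<^bsub>inv_group R K'\<^esub> induced_ideal R K' id M"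
    using ideal_prod_swap[of L K' M K'] invertible_ideal_carrier subringE(1)[OF K']
      ideal_prod_subring_self[OF K']
    unfolding induced_ideal_def by simp
qed

lemma extension_principal:
  assumes "subring K R" "subring K' R" "K \<subseteq> K'"
  shows "induced_ideal R K' id ` principal_ideals R K \<subseteq> principal_ideals R K'"
  using principal_ideal_extend[OF assms] unfolding induced_ideal_def principal_ideals_eq
  by (auto simp: Units_closed)

lemma invertible_ideal_prod_carrier:
  assumes K: "subring K R" and M: "M \<in> invertible_ideals R K"
  shows "ideal_prod R M (carrier R) = carrier R"
proof
  obtain M' where M': "rsubmodule R K M'" "ideal_prod R M M' = K"
    using M unfolding invertible_ideals_def by auto
  have Mc: "M \<subseteq> carrier R" using invertible_ideal_carrier[OF M] .
  show "ideal_prod R M (carrier R) \<subseteq> carrier R" using ideal_prod_carrier Mc by blast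
  have "\<one> \<in> ideal_prod R M (carrier R)"
    using M' subringE(3)[OF K] ideal_prod_mono[OF order_refl rsubmodule_carrier[OF M'(1)]] by blast
  moreover have "\<forall>r\<in>carrier R. \<forall>x\<in>ideal_prod R M (carrier R). r \<otimes> x \<in> ideal_prod R M (carrier R)"
    using rsubmodule_ideal_prod_right[OF order_refl Mc
        rsubmodule_subring[OF carrier_is_subring carrier_is_subring order_refl]]
    unfolding rsubmodule_def by blast
  ultimately show "carrier R \<subseteq> ideal_prod R M (carrier R)"
    using r_one by (metis subsetI)
qed

end

section \<open>Lifting dual bases across a nilpotent ideal\<close>

context cring
begin

lemma finsum_in_closed_set:
  assumes "W \<subseteq> carrier R" "\<zero> \<in> W" "\<And>a b. a \<in> W \<Longrightarrow> b \<in> W \<Longrightarrow> a \<oplus> b \<in> W"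
    and "\<And>k. k < n \<Longrightarrow> f k \<in> W"
  shows "(\<Oplus>k\<in>{..<(n::nat)}. f k) \<in> W"
  using assms(4)
proof (induction n)
  case (Suc n)
  then have "f \<in> {..<n} \<rightarrow> carrier R" "f n \<in> carrier R" using assms(1) by auto
  then have "(\<Oplus>k\<in>{..<Suc n}. f k) = f n \<oplus> (\<Oplus>k\<in>{..<n}. f k)"
    by (simp add: lessThan_Suc finsum_insert)
  then show ?case using Suc assms(3) by simp
qed (simp add: assms(2))

lemma ideal_finsum_closed:
  "ideal I R \<Longrightarrow> (\<And>k. k < n \<Longrightarrow> f k \<in> I) \<Longrightarrow> (\<Oplus>k\<in>{..<(n::nat)}. f k) \<in> I"
  by (rule finsum_in_closed_set)
    (auto simp: ideal.Icarr additive_subgroup.zero_closed additive_subgroup.a_closed ideal.axioms(1))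

lemma ideal_minus_closed: "ideal I R \<Longrightarrow> x \<in> I \<Longrightarrow> y \<in> I \<Longrightarrow> x \<ominus> y \<in> I"
  by (simp add: minus_eq additive_subgroup.a_closed additive_subgroup.a_inv_closed ideal.axioms(1))

lemma ideal_diff_trans:
  assumes I: "ideal I R" and c: "x \<in> carrier R" "y \<in> carrier R" "z \<in> carrier R"
    and "x \<ominus> y \<in> I" "y \<ominus> z \<in> I"
  shows "x \<ominus> z \<in> I"
proof -
  have "x \<ominus> z = (x \<ominus> y) \<oplus> (y \<ominus> z)" using c by algebra
  then show ?thesis
    using assms by (simp add: additive_subgroup.a_closed ideal.axioms(1))
qed

lemma finsum_diff_in_ideal:
  assumes I: "ideal I R" and f: "\<And>k. k < n \<Longrightarrow> f k \<in> carrier R" and g: "\<And>k. k < n \<Longrightarrow> g k \<in> carrier R"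
    and fg: "\<And>k. k < n \<Longrightarrow> f k \<ominus> g k \<in> I"
  shows "(\<Oplus>k\<in>{..<(n::nat)}. f k) \<ominus> (\<Oplus>k\<in>{..<n}. g k) \<in> I"
proof -
  define d where "d = (\<Oplus>k\<in>{..<n}. f k \<ominus> g k)"
  have "(\<Oplus>k\<in>{..<n}. f k) = (\<Oplus>k\<in>{..<n}. (f k \<ominus> g k) \<oplus> g k)"
    using f g by (intro finsum_cong) (auto simp: minus_eq a_assoc l_neg)
  also have "\<dots> = d \<oplus> (\<Oplus>k\<in>{..<n}. g k)"
    unfolding d_def using f g by (intro finsum_addf) auto
  moreover have "d \<in> carrier R" unfolding d_def using f g by (intro finsum_closed) auto
  ultimately have "(\<Oplus>k\<in>{..<n}. f k) \<ominus> (\<Oplus>k\<in>{..<n}. g k) = d"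
    using f g by (simp add: finsum_closed minus_eq a_assoc r_neg)
  then show ?thesis using ideal_finsum_closed[OF I fg] unfolding d_def by simp
qed

lemma finsum_mult_diff_in_ideal:
  assumes I: "ideal I R"
    and c: "\<And>k. k < n \<Longrightarrow> U k \<in> carrier R \<and> V k \<in> carrier R \<and> U' k \<in> carrier R \<and> V' k \<in> carrier R"
    and d: "\<And>k. k < n \<Longrightarrow> U' k \<ominus> U k \<in> I \<and> V' k \<ominus> V k \<in> I"
  shows "(\<Oplus>k\<in>{..<(n::nat)}. U' k \<otimes> V' k) \<ominus> (\<Oplus>k\<in>{..<n}. U k \<otimes> V k) \<in> I"
proof (rule finsum_diff_in_ideal[OF I])
  fix k assume k: "k < n"
  then have "U' k \<otimes> V' k \<ominus> U k \<otimes> V k = (U' k \<ominus> U k) \<otimes> V' k \<oplus> U k \<otimes> (V' k \<ominus> V k)"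
    using c by algebra
  then show "U' k \<otimes> V' k \<ominus> U k \<otimes> V k \<in> I"
    using c[OF k] d[OF k] I by (simp add: ideal.I_l_closed ideal.I_r_closed
        additive_subgroup.a_closed ideal.axioms(1))
qed (use c in auto)

lemma dual_basis_idempotent:
  assumes c: "\<And>j. j < n \<Longrightarrow> U j \<in> carrier R \<and> V j \<in> carrier R"
    and sum_one: "(\<Oplus>j\<in>{..<(n::nat)}. U j \<otimes> V j) = \<one>" and lk: "l < n" "k < n"
  shows "(\<Oplus>j\<in>{..<n}. (U l \<otimes> V j) \<otimes> (U j \<otimes> V k)) = U l \<otimes> V k"
proof -
  have "(\<Oplus>j\<in>{..<n}. (U l \<otimes> V j) \<otimes> (U j \<otimes> V k)) = (\<Oplus>j\<in>{..<n}. (U l \<otimes> V k) \<otimes> (U j \<otimes> V j))"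
    using c lk by (intro finsum_cong) (auto simp: m_ac)
  also have "\<dots> = (U l \<otimes> V k) \<otimes> (\<Oplus>j\<in>{..<n}. U j \<otimes> V j)"
    using c lk by (intro finsum_rdistr[symmetric]) auto
  finally show ?thesis using sum_one c lk by simp
qed

text \<open>The Newton step for the idempotent matrix \<open>P = (U l \<otimes> V k)\<close> (note \<open>P\<^sup>2 = P\<close>, as the
  \<open>U k \<otimes> V k\<close> sum to \<open>\<one>\<close>): writing \<open>P = A + \<epsilon>\<close>, the corrections \<open>U - \<epsilon> U\<close> and
  \<open>V - V \<epsilon>\<close> have product \<open>A\<^sup>2 - \<epsilon>\<^sup>2 + \<epsilon> P \<epsilon>\<close>.\<close>

lemma idempotent_correction:
  fixes U V :: "nat \<Rightarrow> 'a" and a e :: "nat \<Rightarrow> nat \<Rightarrow> 'a" and n :: nat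
  assumes c: "\<And>j. j < n \<Longrightarrow> U j \<in> carrier R \<and> V j \<in> carrier R"
    "\<And>j j'. j < n \<Longrightarrow> j' < n \<Longrightarrow> a j j' \<in> carrier R \<and> e j j' \<in> carrier R"
    and sum_one: "(\<Oplus>j\<in>{..<n}. U j \<otimes> V j) = \<one>"
    and split: "\<And>j j'. j < n \<Longrightarrow> j' < n \<Longrightarrow> U j \<otimes> V j' = a j j' \<oplus> e j j'"
    and lk: "l < n" "k < n"
  defines "\<xi> \<equiv> \<Oplus>j\<in>{..<n}. \<ominus> e l j \<otimes> U j" and "\<eta> \<equiv> \<Oplus>j\<in>{..<n}. \<ominus> V j \<otimes> e j k"
  shows "(U l \<oplus> \<xi>) \<otimes> (V k \<oplus> \<eta>) = (\<Oplus>j\<in>{..<n}. a l j \<otimes> a j k \<ominus> e l j \<otimes> e j k) \<oplus> \<xi> \<otimes> \<eta>"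
proof -
  have cl: "U l \<in> carrier R" "V k \<in> carrier R" "\<xi> \<in> carrier R" "\<eta> \<in> carrier R"
    using c lk unfolding \<xi>_def \<eta>_def by (auto intro!: finsum_closed)
  have P: "U l \<otimes> V k = (\<Oplus>j\<in>{..<n}. (U l \<otimes> V j) \<otimes> (U j \<otimes> V k))"
    using dual_basis_idempotent[OF c(1) sum_one lk] by simp
  have \<xi>V: "\<xi> \<otimes> V k = (\<Oplus>j\<in>{..<n}. \<ominus> e l j \<otimes> (U j \<otimes> V k))"
    unfolding \<xi>_def using c cl lk by (simp add: finsum_ldistr) (intro finsum_cong, auto simp: m_assoc)
  have U\<eta>: "U l \<otimes> \<eta> = (\<Oplus>j\<in>{..<n}. \<ominus> (U l \<otimes> V j) \<otimes> e j k)"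
    unfolding \<eta>_def using c cl lk by (simp add: finsum_rdistr) (intro finsum_cong, auto simp: m_assoc l_minus r_minus)
  have "U l \<otimes> V k \<oplus> \<xi> \<otimes> V k \<oplus> U l \<otimes> \<eta> =
      (\<Oplus>j\<in>{..<n}. (U l \<otimes> V j) \<otimes> (U j \<otimes> V k) \<oplus> \<ominus> e l j \<otimes> (U j \<otimes> V k) \<oplus> \<ominus> (U l \<otimes> V j) \<otimes> e j k)"
    unfolding P \<xi>V U\<eta> using c lk by (simp add: finsum_addf)
  also have "\<dots> = (\<Oplus>j\<in>{..<n}. a l j \<otimes> a j k \<ominus> e l j \<otimes> e j k)"
  proof (rule finsum_cong')
    fix j assume "j \<in> {..<n}"
    then have j: "j < n" by simp
    then have "a l j \<in> carrier R" "e l j \<in> carrier R" "a j k \<in> carrier R" "e j k \<in> carrier R"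
      using c lk by auto
    then show "(U l \<otimes> V j) \<otimes> (U j \<otimes> V k) \<oplus> \<ominus> e l j \<otimes> (U j \<otimes> V k) \<oplus> \<ominus> (U l \<otimes> V j) \<otimes> e j k =
        a l j \<otimes> a j k \<ominus> e l j \<otimes> e j k"
      using split[OF lk(1) j] split[OF j lk(2)] by simp algebra
  qed (use c lk in auto)
  moreover have "(U l \<oplus> \<xi>) \<otimes> (V k \<oplus> \<eta>) = (U l \<otimes> V k \<oplus> \<xi> \<otimes> V k \<oplus> U l \<otimes> \<eta>) \<oplus> \<xi> \<otimes> \<eta>"
    using cl by algebra
  ultimately show ?thesis by simp
qed

end

locale nilpotent_lifting = cring R for R (structure) +
  fixes K E and p :: nat
  assumes subring: "subring K R"
    and generators: "E \<subseteq> carrier R" "finite E" "\<And>e. e \<in> E \<Longrightarrow> e [^] p = \<zero>"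
    and inv_one_plus: "\<And>r. r \<in> K \<Longrightarrow> r \<in> power_ideal R E 1 \<Longrightarrow> inv (\<one> \<oplus> r) \<in> K"
begin

abbreviation J :: "nat \<Rightarrow> 'a set" where
  "J \<equiv> power_ideal R E"

definition K_plus_J :: "nat \<Rightarrow> 'a set" where
  "K_plus_J r = {a \<oplus> d | a d. a \<in> K \<and> d \<in> J r}"

lemma K_closed: "K \<subseteq> carrier R" "\<zero> \<in> K" "\<one> \<in> K"
  "\<And>a b. a \<in> K \<Longrightarrow> b \<in> K \<Longrightarrow> a \<oplus> b \<in> K" "\<And>a b. a \<in> K \<Longrightarrow> b \<in> K \<Longrightarrow> a \<otimes> b \<in> K"
  "\<And>a. a \<in> K \<Longrightarrow> \<ominus> a \<in> K"
  using subringE[OF subring] by auto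

lemma J_ideal: "ideal (J r) R"
  by (rule power_ideal_is_ideal[OF generators(1)])

lemma J_carrier: "d \<in> J r \<Longrightarrow> d \<in> carrier R"
  using ideal.Icarr[OF J_ideal] .

lemma J_closed: "\<zero> \<in> J r"
  "\<And>a b. a \<in> J r \<Longrightarrow> b \<in> J r \<Longrightarrow> a \<oplus> b \<in> J r" "\<And>a. a \<in> J r \<Longrightarrow> \<ominus> a \<in> J r"
  "\<And>a x. a \<in> J r \<Longrightarrow> x \<in> carrier R \<Longrightarrow> x \<otimes> a \<in> J r"
  "\<And>a x. a \<in> J r \<Longrightarrow> x \<in> carrier R \<Longrightarrow> a \<otimes> x \<in> J r"
  using ideal.axioms(1)[OF J_ideal] ideal.I_l_closed[OF J_ideal] ideal.I_r_closed[OF J_ideal]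
  by (auto simp: additive_subgroup.zero_closed additive_subgroup.a_closed additive_subgroup.a_inv_closed)

lemma J_antimono: "r \<le> s \<Longrightarrow> d \<in> J s \<Longrightarrow> d \<in> J r"
  using power_ideal_antimono[OF generators(1)] by blast

lemma J_mult_Suc: "1 \<le> r \<Longrightarrow> a \<in> J r \<Longrightarrow> b \<in> J r \<Longrightarrow> a \<otimes> b \<in> J (Suc r)"
  using power_ideal_mult[OF generators(1)] J_antimono[of "Suc r" "r + r"] by simp

lemma J_nilpotent: "d \<in> J 1 \<Longrightarrow> d [^] Suc (card E * p) = \<zero>"
  using power_ideal_nilpotent[OF generators] .

lemma K_plus_J_carrier: "x \<in> K_plus_J r \<Longrightarrow> x \<in> carrier R"
  unfolding K_plus_J_def using K_closed J_carrier by auto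

lemma K_plus_J_closed:
  "a \<in> K \<Longrightarrow> a \<in> K_plus_J r" "d \<in> J r \<Longrightarrow> d \<in> K_plus_J r"
  "x \<in> K_plus_J r \<Longrightarrow> y \<in> K_plus_J r \<Longrightarrow> x \<oplus> y \<in> K_plus_J r"
  "x \<in> K_plus_J r \<Longrightarrow> y \<in> K_plus_J r \<Longrightarrow> x \<otimes> y \<in> K_plus_J r"
proof -
  have mem: "a \<oplus> d \<in> K_plus_J r" if "a \<in> K" "d \<in> J r" for a d
    unfolding K_plus_J_def using that by blast
  show "a \<in> K_plus_J r" if "a \<in> K"
    using mem[OF that J_closed(1)] that K_closed(1) by (simp add: subsetD)
  show "d \<in> K_plus_J r" if "d \<in> J r"
    using mem[OF K_closed(2) that] that J_carrier by simp
  assume "x \<in> K_plus_J r" "y \<in> K_plus_J r"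
  then obtain a d b d' where ad: "a \<in> K" "d \<in> J r" "x = a \<oplus> d" "b \<in> K" "d' \<in> J r" "y = b \<oplus> d'"
    unfolding K_plus_J_def by auto
  then have c: "a \<in> carrier R" "b \<in> carrier R" "d \<in> carrier R" "d' \<in> carrier R"
    using K_closed(1) J_carrier by auto
  have "x \<oplus> y = (a \<oplus> b) \<oplus> (d \<oplus> d')" using ad(3,6) c by (simp add: a_ac)
  then show "x \<oplus> y \<in> K_plus_J r"
    using mem K_closed(4) J_closed(2) ad by simp
  have "x \<otimes> y = a \<otimes> b \<oplus> (a \<otimes> d' \<oplus> d \<otimes> (b \<oplus> d'))"
    unfolding ad(3,6) using c by algebra
  moreover have "a \<otimes> d' \<oplus> d \<otimes> (b \<oplus> d') \<in> J r"
    using ad c J_closed(2,4,5) by simp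
  ultimately show "x \<otimes> y \<in> K_plus_J r"
    using mem K_closed(5) ad by simp
qed

lemma K_plus_J_finsum:
  "(\<And>k. k < n \<Longrightarrow> f k \<in> K_plus_J r) \<Longrightarrow> (\<Oplus>k\<in>{..<(n::nat)}. f k) \<in> K_plus_J r"
  by (rule finsum_in_closed_set) (use K_plus_J_carrier K_plus_J_closed K_closed in auto)

lemma K_plus_J_top: "K_plus_J (Suc (card E * p)) = K"
proof
  show "K_plus_J (Suc (card E * p)) \<subseteq> K"
    using power_ideal_eq_zero[OF generators] K_closed(1) unfolding K_plus_J_def by (auto simp: subsetD)
qed (use K_plus_J_closed(1) in blast)

text \<open>The \<open>K\<close>-part of \<open>c\<close> is \<open>\<one>\<close> plus a nilpotent, so its inverse lies in \<open>K\<close>.\<close>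

lemma K_plus_J_inv:
  assumes r: "1 \<le> r" and c: "c \<in> K_plus_J r" and c1: "c \<ominus> \<one> \<in> J 1"
  shows "c \<in> Units R \<and> inv c \<in> K_plus_J r \<and> inv c \<ominus> \<one> \<in> J 1"
proof -
  have cc: "c \<in> carrier R" using c K_plus_J_carrier by auto
  have cu: "c \<in> Units R"
    using one_plus_nilpotent_Units[OF J_carrier[OF c1] J_nilpotent[OF c1]] cc by algebra
  obtain a e where ae: "a \<in> K" "e \<in> J r" "c = a \<oplus> e" using c unfolding K_plus_J_def by auto
  have ac: "a \<in> carrier R" "e \<in> carrier R" using ae K_closed J_carrier by auto
  have "a \<ominus> \<one> = (c \<ominus> \<one>) \<ominus> e" using ae ac by simp algebra
  then have "a \<ominus> \<one> \<in> J 1"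
    using ideal_minus_closed[OF J_ideal c1 J_antimono[OF r ae(2)]] by simp
  moreover have "a \<ominus> \<one> \<in> K" using K_closed ae by (simp add: minus_eq)
  moreover have "\<one> \<oplus> (a \<ominus> \<one>) = a" using ac by algebra
  ultimately have au: "a \<in> Units R" "inv a \<in> K"
    using inv_one_plus one_plus_nilpotent_Units[OF _ J_nilpotent] J_carrier by metis+
  have ic: "inv c \<in> carrier R" "inv a \<in> carrier R" using cu au by auto
  have "inv c \<ominus> inv a = inv c \<otimes> (\<ominus> e) \<otimes> inv a"
  proof -
    have "inv c \<otimes> (\<ominus> e) \<otimes> inv a = (inv c \<otimes> c) \<otimes> (\<ominus> (inv a)) \<oplus> inv c \<otimes> (a \<otimes> inv a)"
      using ae ac ic by simp algebra
    then show ?thesis using cu au ic by (simp add: minus_eq a_comm)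
  qed
  then have "inv c \<ominus> inv a \<in> J r" using J_closed ae ic by simp
  moreover have "inv c = inv a \<oplus> (inv c \<ominus> inv a)" using ic by algebra
  ultimately have "inv c \<in> K_plus_J r" unfolding K_plus_J_def using au by blast
  moreover have "inv c \<ominus> \<one> = inv c \<otimes> (\<ominus> (c \<ominus> \<one>))"
  proof -
    have "inv c \<otimes> (\<ominus> (c \<ominus> \<one>)) = \<ominus> (inv c \<otimes> c) \<oplus> inv c" using ic cc by algebra
    then show ?thesis using cu ic by (simp add: minus_eq a_comm)
  qed
  then have "inv c \<ominus> \<one> \<in> J 1" using J_closed c1 ic by simp
  ultimately show ?thesis using cu by simp
qed

definition dual_pair :: "nat \<Rightarrow> nat \<Rightarrow> (nat \<Rightarrow> 'a) \<Rightarrow> (nat \<Rightarrow> 'a) \<Rightarrow> bool" where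
  "dual_pair r n U V \<longleftrightarrow> (\<forall>k<n. U k \<in> carrier R \<and> V k \<in> carrier R) \<and>
     (\<forall>l<n. \<forall>k<n. U l \<otimes> V k \<in> K_plus_J r) \<and> (\<Oplus>k\<in>{..<n}. U k \<otimes> V k) = \<one>"

lemma normalize_dual_pair:
  fixes n :: nat
  assumes r: "1 \<le> r" and c: "\<And>k. k < n \<Longrightarrow> U k \<in> carrier R \<and> V k \<in> carrier R"
    and prods: "\<And>l k. l < n \<Longrightarrow> k < n \<Longrightarrow> U l \<otimes> V k \<in> K_plus_J r"
    and sum: "(\<Oplus>k\<in>{..<n}. U k \<otimes> V k) \<ominus> \<one> \<in> J 1"
  shows "\<exists>U'. dual_pair r n U' V \<and> (\<forall>k<n. U' k \<ominus> U k \<in> J 1)"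
proof -
  define s where "s = (\<Oplus>k\<in>{..<n}. U k \<otimes> V k)"
  have "s \<in> K_plus_J r" unfolding s_def using prods K_plus_J_finsum by simp
  then obtain su: "s \<in> Units R" and si: "inv s \<in> K_plus_J r" and si1: "inv s \<ominus> \<one> \<in> J 1"
    using K_plus_J_inv[OF r] sum unfolding s_def by auto
  have isc: "inv s \<in> carrier R" using su by auto
  define U' where "U' l = U l \<otimes> inv s" for l
  have "U' k \<in> carrier R \<and> V k \<in> carrier R \<and> U' k \<ominus> U k \<in> J 1" if "k < n" for k
  proof -
    have "U' k \<ominus> U k = U k \<otimes> (inv s \<ominus> \<one>)" unfolding U'_def using c[OF that] isc by algebra
    then show ?thesis unfolding U'_def using c[OF that] isc J_closed si1 by simp
  qed
  moreover have "U' l \<otimes> V k \<in> K_plus_J r" if "l < n" "k < n" for l k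
  proof -
    have "U' l \<otimes> V k = (U l \<otimes> V k) \<otimes> inv s" unfolding U'_def using c that isc by (simp add: m_ac)
    then show ?thesis using K_plus_J_closed(4) prods[OF that] si by simp
  qed
  moreover have "(\<Oplus>k\<in>{..<n}. U' k \<otimes> V k) = (\<Oplus>k\<in>{..<n}. (U k \<otimes> V k) \<otimes> inv s)"
    unfolding U'_def using c isc by (intro finsum_cong) (auto simp: m_ac)
  moreover have "\<dots> = s \<otimes> inv s"
    using finsum_ldistr[of "{..<n}" "inv s" "\<lambda>k. U k \<otimes> V k"] c isc unfolding s_def by auto
  ultimately show ?thesis unfolding dual_pair_def using su by auto
qed

lemma corrected_product:
  fixes n :: nat
  assumes r: "1 \<le> r" and c: "\<And>k. k < n \<Longrightarrow> U k \<in> carrier R \<and> V k \<in> carrier R"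
    and sum_one: "(\<Oplus>k\<in>{..<n}. U k \<otimes> V k) = \<one>"
    and ae: "\<And>l k. l < n \<Longrightarrow> k < n \<Longrightarrow> a l k \<in> K \<and> e l k \<in> J r \<and> U l \<otimes> V k = a l k \<oplus> e l k"
    and lk: "l < n" "k < n"
  shows "(U l \<oplus> (\<Oplus>j\<in>{..<n}. \<ominus> e l j \<otimes> U j)) \<otimes> (V k \<oplus> (\<Oplus>j\<in>{..<n}. \<ominus> V j \<otimes> e j k))
    \<in> K_plus_J (Suc r)"
proof -
  have ae_c: "\<And>l k. l < n \<Longrightarrow> k < n \<Longrightarrow> a l k \<in> carrier R \<and> e l k \<in> carrier R"
    and split: "\<And>l k. l < n \<Longrightarrow> k < n \<Longrightarrow> U l \<otimes> V k = a l k \<oplus> e l k"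
    using ae K_closed(1) J_carrier by blast+
  have "a l j \<otimes> a j k \<ominus> e l j \<otimes> e j k \<in> K_plus_J (Suc r)" if j: "j < n" for j
  proof -
    have "a l j \<otimes> a j k \<in> K" using ae j lk K_closed(5) by blast
    moreover have "\<ominus> (e l j \<otimes> e j k) \<in> J (Suc r)"
      using ae j lk J_mult_Suc[OF r] J_closed(3) by blast
    ultimately show ?thesis using K_plus_J_closed(1-3) by (simp add: minus_eq)
  qed
  then have "(\<Oplus>j\<in>{..<n}. a l j \<otimes> a j k \<ominus> e l j \<otimes> e j k) \<in> K_plus_J (Suc r)"
    by (rule K_plus_J_finsum)
  moreover have "(\<Oplus>j\<in>{..<n}. \<ominus> e l j \<otimes> U j) \<in> J r" "(\<Oplus>j\<in>{..<n}. \<ominus> V j \<otimes> e j k) \<in> J r"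
    using lk ae c J_closed by (auto intro!: ideal_finsum_closed[OF J_ideal])
  then have "(\<Oplus>j\<in>{..<n}. \<ominus> e l j \<otimes> U j) \<otimes> (\<Oplus>j\<in>{..<n}. \<ominus> V j \<otimes> e j k) \<in> K_plus_J (Suc r)"
    using J_mult_Suc[OF r] K_plus_J_closed(2) by blast
  ultimately show ?thesis
    using idempotent_correction[OF c ae_c sum_one split lk] K_plus_J_closed(3) by simp
qed

lemma dual_pair_correction:
  assumes r: "1 \<le> r" and UV: "dual_pair r n U V"
  shows "\<exists>U' V'. (\<forall>k<n. U' k \<in> carrier R \<and> V' k \<in> carrier R \<and> U' k \<ominus> U k \<in> J 1 \<and> V' k \<ominus> V k \<in> J 1) \<and>
    (\<forall>l<n. \<forall>k<n. U' l \<otimes> V' k \<in> K_plus_J (Suc r)) \<and> (\<Oplus>k\<in>{..<n}. U' k \<otimes> V' k) \<ominus> \<one> \<in> J 1"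
proof -
  have c: "\<And>k. k < n \<Longrightarrow> U k \<in> carrier R \<and> V k \<in> carrier R"
    and sum_one: "(\<Oplus>k\<in>{..<n}. U k \<otimes> V k) = \<one>"
    using UV unfolding dual_pair_def by auto
  have "\<And>l k. l < n \<Longrightarrow> k < n \<Longrightarrow> \<exists>a\<in>K. \<exists>e\<in>J r. U l \<otimes> V k = a \<oplus> e"
    using UV unfolding dual_pair_def K_plus_J_def by blast
  then obtain a where "\<And>l k. l < n \<Longrightarrow> k < n \<Longrightarrow> a l k \<in> K \<and> (\<exists>e\<in>J r. U l \<otimes> V k = a l k \<oplus> e)"
    by metis
  then obtain e
    where ae: "\<And>l k. l < n \<Longrightarrow> k < n \<Longrightarrow> a l k \<in> K \<and> e l k \<in> J r \<and> U l \<otimes> V k = a l k \<oplus> e l k"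
    by metis
  define \<xi> where "\<xi> l = (\<Oplus>j\<in>{..<n}. \<ominus> e l j \<otimes> U j)" for l
  define \<eta> where "\<eta> k = (\<Oplus>j\<in>{..<n}. \<ominus> V j \<otimes> e j k)" for k
  define U' where "U' l = U l \<oplus> \<xi> l" for l
  define V' where "V' k = V k \<oplus> \<eta> k" for k
  have c': "U' k \<in> carrier R \<and> V' k \<in> carrier R \<and> U' k \<ominus> U k \<in> J 1 \<and> V' k \<ominus> V k \<in> J 1"
    if k: "k < n" for k
  proof -
    have J: "\<xi> k \<in> J r" "\<eta> k \<in> J r"
      unfolding \<xi>_def \<eta>_def using k ae c J_closed by (auto intro!: ideal_finsum_closed[OF J_ideal])
    have "U k \<in> carrier R" "V k \<in> carrier R" "\<xi> k \<in> carrier R" "\<eta> k \<in> carrier R"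
      using c[OF k] J J_carrier by auto
    then have "U' k \<ominus> U k = \<xi> k" "V' k \<ominus> V k = \<eta> k"
      unfolding U'_def V'_def by algebra+
    with J show ?thesis
      using c[OF k] J_carrier J_antimono[OF r] unfolding U'_def V'_def by auto
  qed
  moreover have "(\<Oplus>k\<in>{..<n}. U' k \<otimes> V' k) \<ominus> (\<Oplus>k\<in>{..<n}. U k \<otimes> V k) \<in> J 1"
    by (rule finsum_mult_diff_in_ideal[OF J_ideal]) (use c c' in auto)
  moreover have "U' l \<otimes> V' k \<in> K_plus_J (Suc r)" if "l < n" "k < n" for l k
    unfolding U'_def V'_def \<xi>_def \<eta>_def by (rule corrected_product[OF r c sum_one ae that])
  ultimately show ?thesis using sum_one by (intro exI[of _ U'] exI[of _ V']) auto
qed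

lemma dual_pair_step:
  assumes r: "1 \<le> r" and UV: "dual_pair r n U V"
  shows "\<exists>U' V'. dual_pair (Suc r) n U' V' \<and> (\<forall>k<n. U' k \<ominus> U k \<in> J 1 \<and> V' k \<ominus> V k \<in> J 1)"
proof -
  obtain U' V' where c': "\<forall>k<n. U' k \<in> carrier R \<and> V' k \<in> carrier R \<and> U' k \<ominus> U k \<in> J 1 \<and> V' k \<ominus> V k \<in> J 1"
    and prods': "\<forall>l<n. \<forall>k<n. U' l \<otimes> V' k \<in> K_plus_J (Suc r)"
    and sum': "(\<Oplus>k\<in>{..<n}. U' k \<otimes> V' k) \<ominus> \<one> \<in> J 1"
    using dual_pair_correction[OF r UV] by blast
  then obtain U'' where U'': "dual_pair (Suc r) n U'' V'" "\<forall>k<n. U'' k \<ominus> U' k \<in> J 1"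
    using normalize_dual_pair[of "Suc r" n U' V'] by auto
  have "U'' k \<ominus> U k \<in> J 1" if k: "k < n" for k
    using ideal_diff_trans[OF J_ideal] U'' c' UV k unfolding dual_pair_def by meson
  with U'' c' show ?thesis by blast
qed

theorem lift_dual_pair:
  fixes n :: nat
  assumes c: "\<And>k. k < n \<Longrightarrow> x k \<in> carrier R \<and> y k \<in> carrier R"
    and prods: "\<And>l k. l < n \<Longrightarrow> k < n \<Longrightarrow> x l \<otimes> y k \<in> K_plus_J 1"
    and sum: "(\<Oplus>k\<in>{..<n}. x k \<otimes> y k) \<ominus> \<one> \<in> J 1"
  shows "\<exists>U V. (\<forall>k<n. U k \<in> carrier R \<and> V k \<in> carrier R \<and> U k \<ominus> x k \<in> J 1 \<and> V k \<ominus> y k \<in> J 1) \<and>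
    (\<forall>l<n. \<forall>k<n. U l \<otimes> V k \<in> K) \<and> (\<Oplus>k\<in>{..<n}. U k \<otimes> V k) = \<one>"
proof -
  have "\<exists>U V. dual_pair (Suc m) n U V \<and> (\<forall>k<n. U k \<ominus> x k \<in> J 1 \<and> V k \<ominus> y k \<in> J 1)" for m
  proof (induction m)
    case 0
    have "y k \<ominus> y k \<in> J 1" if "k < n" for k
      using c[OF that] J_closed(1) by (simp add: r_neg minus_eq)
    then show ?case using normalize_dual_pair[OF _ c prods sum] by auto
  next
    case (Suc m)
    then obtain U V where XY: "dual_pair (Suc m) n U V" "\<forall>k<n. U k \<ominus> x k \<in> J 1 \<and> V k \<ominus> y k \<in> J 1"
      by blast
    then obtain U' V' where U'V': "dual_pair (Suc (Suc m)) n U' V'"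
      "\<forall>k<n. U' k \<ominus> U k \<in> J 1 \<and> V' k \<ominus> V k \<in> J 1"
      using dual_pair_step[of "Suc m" n U V] XY(1) by auto
    have "U' k \<ominus> x k \<in> J 1 \<and> V' k \<ominus> y k \<in> J 1" if "k < n" for k
      using U'V' XY c[OF that] that ideal_diff_trans[OF J_ideal] unfolding dual_pair_def by meson
    then show ?case using U'V'(1) by blast
  qed
  then obtain U V where "dual_pair (Suc (card E * p)) n U V" "\<forall>k<n. U k \<ominus> x k \<in> J 1 \<and> V k \<ominus> y k \<in> J 1"
    by blast
  then show ?thesis unfolding dual_pair_def K_plus_J_top by blast
qed

end

section \<open>Extensions whose ring map has a nil kernel\<close>

context cring
begin

lemma ideal_prod_unit_subset:
  assumes "U \<subseteq> carrier R" "B \<subseteq> carrier R" "\<one> \<in> B" "ideal_prod R U B = B"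
  shows "U \<subseteq> B"
  using mult_in_ideal_prod[OF assms(1,2) _ assms(3)] assms by (auto simp: subsetD)

lemma invertible_ideal_generated:
  assumes K: "subring K R" and L: "rsubmodule R K L" and L': "rsubmodule R K L'"
    and LL': "ideal_prod R L L' = K"
    and fg: "\<And>k. k < n \<Longrightarrow> f k \<in> L \<and> g k \<in> L'" and sum: "(\<Oplus>k\<in>{..<(n::nat)}. f k \<otimes> g k) = \<one>"
  shows "L = ideal_prod R K (f ` {..<n})"
proof
  have Lc: "L \<subseteq> carrier R" "L' \<subseteq> carrier R" using L L' rsubmodule_carrier by auto
  have fc: "f k \<in> carrier R" "g k \<in> carrier R" if "k < n" for k using fg[OF that] Lc by auto
  have "f ` {..<n} \<subseteq> L" using fg by auto
  then show "ideal_prod R K (f ` {..<n}) \<subseteq> L"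
    using ideal_prod_mono[OF order_refl] ideal_prod_subring_left[OF K L] by blast
  show "L \<subseteq> ideal_prod R K (f ` {..<n})"
  proof
    fix x assume x: "x \<in> L"
    then have xc: "x \<in> carrier R" using Lc by auto
    have "x = x \<otimes> (\<Oplus>k\<in>{..<n}. f k \<otimes> g k)" using sum xc by simp
    also have "\<dots> = (\<Oplus>k\<in>{..<n}. x \<otimes> (f k \<otimes> g k))"
      using fc xc by (intro finsum_rdistr) auto
    also have "\<dots> = (\<Oplus>k\<in>{..<n}. (x \<otimes> g k) \<otimes> f k)"
      using fc xc by (intro finsum_cong) (auto simp: m_ac)
    finally have "x = (\<Oplus>k\<in>{..<n}. (x \<otimes> g k) \<otimes> f k)" .
    moreover have "\<forall>k<n. x \<otimes> g k \<in> K \<and> f k \<in> f ` {..<n}"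
      using mult_in_ideal_prod[OF Lc x] fg LL' by auto
    ultimately show "x \<in> ideal_prod R K (f ` {..<n})"
      unfolding ideal_prod_iff by (intro exI[of _ n] exI[of _ "\<lambda>k. x \<otimes> g k"] exI[of _ f] conjI)
  qed
qed

lemma invertible_of_dual_pair:
  assumes K: "subring K R" and c: "\<And>k. k < n \<Longrightarrow> U k \<in> carrier R \<and> V k \<in> carrier R"
    and prods: "\<And>l k. l < n \<Longrightarrow> k < n \<Longrightarrow> U l \<otimes> V k \<in> K"
    and sum: "(\<Oplus>k\<in>{..<(n::nat)}. U k \<otimes> V k) = \<one>"
  shows "ideal_prod R K (U ` {..<n}) \<in> invertible_ideals R K"
proof -
  have Kc: "K \<subseteq> carrier R" using subringE(1)[OF K] .
  have XYc: "U ` {..<n} \<subseteq> carrier R" "V ` {..<n} \<subseteq> carrier R" using c by auto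
  have KK: "rsubmodule R K K" using rsubmodule_subring[OF K K order_refl] .
  let ?XY = "ideal_prod R (U ` {..<n}) (V ` {..<n})"
  have XY_K: "?XY \<subseteq> K"
    using XYc prods subringE(2,7)[OF K] by (intro ideal_prod_minimal) auto
  have one: "\<one> \<in> ?XY"
    unfolding ideal_prod_iff using sum by (intro exI[of _ n] exI[of _ U] exI[of _ V]) auto
  have "ideal_prod R (ideal_prod R K (U ` {..<n})) (ideal_prod R K (V ` {..<n})) = ideal_prod R K ?XY"
    using ideal_prod_swap[OF Kc XYc(1) Kc XYc(2)] ideal_prod_subring_self[OF K] by simp
  also have "\<dots> = K"
  proof
    show "ideal_prod R K ?XY \<subseteq> K"
      using ideal_prod_mono[OF order_refl XY_K] ideal_prod_subring_self[OF K] by auto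
    show "K \<subseteq> ideal_prod R K ?XY"
      using mult_in_ideal_prod[OF Kc ideal_prod_carrier[OF XYc] _ one] Kc by (auto simp: subsetD)
  qed
  finally show ?thesis
    using rsubmodule_ideal_prod[OF Kc KK] XYc unfolding invertible_ideals_def by blast
qed

lemma principal_ideal_of_dual:
  assumes K: "subring K R" and L: "rsubmodule R K L" and L': "rsubmodule R K L'"
    and LL': "ideal_prod R L L' = K" and x: "x \<in> L" and w: "w \<in> L'" and xw: "x \<otimes> w = \<one>"
  shows "x \<in> Units R \<and> L = principal_ideal K x"
proof -
  have Lc: "L \<subseteq> carrier R" "L' \<subseteq> carrier R" using L L' rsubmodule_carrier by auto
  have c: "x \<in> carrier R" "w \<in> carrier R" using x w Lc by auto
  have "L \<subseteq> principal_ideal K x"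
  proof
    fix l assume l: "l \<in> L"
    have "l = (l \<otimes> w) \<otimes> x" using xw c l Lc by (simp add: m_ac subsetD)
    moreover have "l \<otimes> w \<in> K" using mult_in_ideal_prod[OF Lc l w] LL' by simp
    ultimately show "l \<in> principal_ideal K x" unfolding principal_ideal_def by auto
  qed
  moreover have "principal_ideal K x \<subseteq> L"
    using L x unfolding principal_ideal_def rsubmodule_def by auto
  moreover have "x \<in> Units R" using xw c m_comm unfolding Units_def by auto
  ultimately show ?thesis by auto
qed

end

context ring_hom_cring
begin

lemma hom_eq_of_minus_zero:
  assumes "x \<in> carrier R" "y \<in> carrier R" "h (x \<ominus> y) = \<zero>\<^bsub>S\<^esub>"
  shows "h x = h y"
proof -
  have "h x \<ominus>\<^bsub>S\<^esub> h y = \<zero>\<^bsub>S\<^esub>" using assms by (simp add: a_minus_def)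
  then show ?thesis using assms by simp
qed

lemma power_ideal_in_kernel:
  assumes E: "E \<subseteq> carrier R" and E0: "\<And>e. e \<in> E \<Longrightarrow> h e = \<zero>\<^bsub>S\<^esub>" and d: "d \<in> power_ideal R E 1"
  shows "h d = \<zero>\<^bsub>S\<^esub>"
proof -
  have "{listprod R xs | xs. set xs \<subseteq> E \<and> 1 \<le> length xs} \<subseteq> a_kernel R S h"
  proof
    fix x assume "x \<in> {listprod R xs | xs. set xs \<subseteq> E \<and> 1 \<le> length xs}"
    then obtain e ys where "x = e \<otimes> listprod R ys" "e \<in> E" "set ys \<subseteq> E"
      by (auto simp: Suc_le_length_iff)
    then show "x \<in> a_kernel R S h"
      using E E0 unfolding a_kernel_def' by (auto simp: subsetD)
  qed
  then have "power_ideal R E 1 \<subseteq> a_kernel R S h"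
    unfolding power_ideal_def by (rule R.genideal_minimal[OF ring.kernel_is_ideal])
  then show ?thesis using d unfolding a_kernel_def' by auto
qed

end

locale nil_kernel_hom = ring_hom_cring +
  fixes K
  assumes subring: "subring K R"
    and kernel_nil: "\<And>x. x \<in> carrier R \<Longrightarrow> h x = \<zero>\<^bsub>S\<^esub> \<Longrightarrow> \<exists>m::nat. x [^] m = \<zero>"
    and inv_one_plus_nilpotent: "\<And>r m. r \<in> K \<Longrightarrow> r [^] (m::nat) = \<zero> \<Longrightarrow> inv (\<one> \<oplus> r) \<in> K"
begin

lemma image_subring: "subring (h ` K) S"
  using ring.img_is_subring[OF subring] .

lemma image_carrier_subring: "subring (h ` carrier R) S"
  using ring.img_is_subring[OF R.carrier_is_subring] .

lemma image_subset: "h ` K \<subseteq> h ` carrier R"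
  using subringE(1)[OF subring] by auto

lemma principal_of_almost_dual:
  assumes L: "rsubmodule R K L" and L': "rsubmodule R K L'" and LL': "ideal_prod R L L' = K"
    and x: "x \<in> L" and w: "w \<in> L'" and s: "s \<in> K" "h s = \<zero>\<^bsub>S\<^esub>" and xws: "x \<otimes> w \<oplus> s = \<one>"
  shows "L \<in> principal_ideals R K"
proof -
  have c: "x \<in> carrier R" "w \<in> carrier R" "s \<in> carrier R"
    using x w s L L' subringE(1)[OF subring] R.rsubmodule_carrier by auto
  have "x \<otimes> w = (x \<otimes> w \<oplus> s) \<ominus> s" using c by algebra
  then have xw: "x \<otimes> w = \<one> \<ominus> s" using xws by simp
  obtain m :: nat where "s [^] m = \<zero>" using kernel_nil[OF c(3) s(2)] by blast
  then have "(\<ominus> s) [^] m = \<zero>" using R.nilpotent_neg c by blast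
  then have u: "\<one> \<ominus> s \<in> Units R" "inv (\<one> \<ominus> s) \<in> K"
    using R.one_plus_nilpotent_Units inv_one_plus_nilpotent subringE(5)[OF subring s(1)] c
    by (simp_all add: a_minus_def)
  have "x \<otimes> (inv (\<one> \<ominus> s) \<otimes> w) = inv (\<one> \<ominus> s) \<otimes> (x \<otimes> w)"
    using u c by (simp add: R.m_lcomm R.Units_closed)
  then have "x \<otimes> (inv (\<one> \<ominus> s) \<otimes> w) = \<one>" using u xw by simp
  moreover have "inv (\<one> \<ominus> s) \<otimes> w \<in> L'" using L' u(2) w unfolding rsubmodule_def by auto
  ultimately have "x \<in> Units R \<and> L = R.principal_ideal K x"
    using R.principal_ideal_of_dual[OF subring L L' LL' x] by blast
  then show ?thesis unfolding R.principal_ideals_eq by auto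
qed

lemma image_principal_generator:
  assumes L: "rsubmodule R K L" and y: "y \<in> Units S" "h ` L = S.principal_ideal (h ` K) y"
  shows "\<exists>x\<in>L. \<forall>l\<in>L. \<exists>a\<in>K. h l = h (a \<otimes> x)"
proof -
  have Kc: "K \<subseteq> carrier R" using subringE(1)[OF subring] .
  have "y = \<one>\<^bsub>S\<^esub> \<otimes>\<^bsub>S\<^esub> y" using S.Units_closed[OF y(1)] by simp
  then have "y \<in> S.principal_ideal (h ` K) y"
    unfolding S.principal_ideal_def using subringE(3)[OF image_subring] by blast
  then obtain x where x: "x \<in> L" "h x = y" using y(2) by (metis imageE)
  have xc: "x \<in> carrier R" using x L R.rsubmodule_carrier by auto
  have "\<exists>a\<in>K. h l = h (a \<otimes> x)" if "l \<in> L" for l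
  proof -
    have "h l \<in> (\<lambda>r. r \<otimes>\<^bsub>S\<^esub> h x) ` h ` K"
      using that y(2) x(2) unfolding S.principal_ideal_def by blast
    then obtain a where "a \<in> K" "h l = h a \<otimes>\<^bsub>S\<^esub> h x" by blast
    then show ?thesis using xc Kc by (metis hom_mult subsetD)
  qed
  with x show ?thesis by blast
qed

text \<open>If \<open>h(L)\<close> is generated by \<open>h x\<close> with \<open>x \<in> L\<close>, write \<open>\<one> = \<Sum> f\<^sub>k g\<^sub>k\<close> with
  \<open>f\<^sub>k \<in> L\<close>, \<open>g\<^sub>k \<in> L\<^sup>-\<^sup>1\<close> and \<open>h f\<^sub>k = h (a\<^sub>k x)\<close>; then \<open>\<one> = x w + s\<close> with
  \<open>w = \<Sum> a\<^sub>k g\<^sub>k\<close> and \<open>s = \<Sum> (f\<^sub>k - a\<^sub>k x) g\<^sub>k\<close> in the kernel.\<close>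

lemma principal_of_image_principal:
  assumes L: "L \<in> invertible_ideals R K"
    and y: "y \<in> Units S" "h ` L = S.principal_ideal (h ` K) y"
  shows "L \<in> principal_ideals R K"
proof -
  have Kc: "K \<subseteq> carrier R" using subringE(1)[OF subring] .
  obtain L' where L': "rsubmodule R K L" "rsubmodule R K L'" "ideal_prod R L L' = K"
    using L unfolding invertible_ideals_def by auto
  have Lc: "L \<subseteq> carrier R" "L' \<subseteq> carrier R" using L' R.rsubmodule_carrier by auto
  obtain x where x: "x \<in> L" and gen: "\<And>l. l \<in> L \<Longrightarrow> \<exists>a\<in>K. h l = h (a \<otimes> x)"
    using image_principal_generator[OF L'(1) y] by blast
  have xc: "x \<in> carrier R" using x Lc by auto
  have "\<one> \<in> ideal_prod R L L'" using L'(3) subringE(3)[OF subring] by simp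
  then obtain n :: nat and f g where fg: "\<And>k. k < n \<Longrightarrow> f k \<in> L \<and> g k \<in> L'"
    and sum: "\<one> = (\<Oplus>k\<in>{..<n}. f k \<otimes> g k)"
    unfolding R.ideal_prod_iff by auto
  have fc: "f k \<in> carrier R" "g k \<in> carrier R" if "k < n" for k using fg[OF that] Lc by auto
  have "\<exists>a\<in>K. h (f k) = h (a \<otimes> x)" if "k < n" for k using gen fg[OF that] by blast
  then obtain a where a: "\<And>k. k < n \<Longrightarrow> a k \<in> K \<and> h (f k) = h (a k \<otimes> x)"
    by metis
  have ac: "a k \<in> carrier R" if "k < n" for k using a[OF that] Kc by auto
  define z where "z k = f k \<ominus> a k \<otimes> x" for k
  define s where "s = (\<Oplus>k\<in>{..<n}. z k \<otimes> g k)"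
  define w where "w = (\<Oplus>k\<in>{..<n}. a k \<otimes> g k)"
  have z: "z k \<in> L" "z k \<in> a_kernel R S h" if k: "k < n" for k
  proof -
    show "z k \<in> L"
      using L'(1) fg[OF k] a[OF k] x unfolding z_def rsubmodule_def by (auto simp: a_minus_def)
    have "h (z k) = h (f k) \<ominus>\<^bsub>S\<^esub> h (a k \<otimes> x)"
      using fc[OF k] ac[OF k] xc unfolding z_def by (simp add: a_minus_def)
    then show "z k \<in> a_kernel R S h"
      using a[OF k] ac[OF k] fc[OF k] xc unfolding z_def a_kernel_def' by simp
  qed
  have "s \<in> ideal_prod R L L'"
    unfolding s_def R.ideal_prod_iff using fg z by (intro exI[of _ n] exI[of _ z] exI[of _ g]) auto
  then have s_K: "s \<in> K" using L'(3) by simp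
  have "s \<in> a_kernel R S h"
    unfolding s_def using z(2) fc ideal.I_r_closed[OF ring.kernel_is_ideal]
    by (intro R.ideal_finsum_closed[OF ring.kernel_is_ideal]) auto
  then have s0: "h s = \<zero>\<^bsub>S\<^esub>" unfolding a_kernel_def' by simp
  have "w \<in> ideal_prod R K L'"
    unfolding w_def R.ideal_prod_iff using a fg by (intro exI[of _ n] exI[of _ a] exI[of _ g]) auto
  then have w: "w \<in> L'" using R.ideal_prod_subring_left[OF subring L'(2)] by simp
  have "x \<otimes> w \<oplus> s = (\<Oplus>k\<in>{..<n}. x \<otimes> (a k \<otimes> g k) \<oplus> z k \<otimes> g k)"
    unfolding w_def s_def z_def using fc ac xc by (simp add: R.finsum_rdistr R.finsum_addf)
  also have "\<dots> = \<one>"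
    unfolding sum z_def using fc ac xc by (intro R.finsum_cong') (auto, algebra)
  finally show ?thesis
    using principal_of_almost_dual[OF L' x w s_K s0] by simp
qed

end

context nil_kernel_hom
begin

lemma image_carrier_rsubmodule: "rsubmodule S (h ` K) (h ` carrier R)"
  using S.rsubmodule_subring[OF image_subring image_carrier_subring image_subset] .

lemma invertible_subset_image:
  assumes L: "rsubmodule S (h ` K) L" and L': "rsubmodule S (h ` K) L'"
    and LL': "ideal_prod S L L' = h ` K" and LB: "ideal_prod S L (h ` carrier R) = h ` carrier R"
  shows "L \<subseteq> h ` carrier R" "L' \<subseteq> h ` carrier R"
proof -
  let ?B = "h ` carrier R"
  have Lc: "L \<subseteq> carrier S" "L' \<subseteq> carrier S" using L L' S.rsubmodule_carrier by auto
  have Bc: "?B \<subseteq> carrier S" "\<one>\<^bsub>S\<^esub> \<in> ?B" using subringE(1,3)[OF image_carrier_subring] by auto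
  have "ideal_prod S L' ?B = ideal_prod S (ideal_prod S L' L) ?B"
    using LB S.ideal_prod_mult_assoc[OF Lc(2) Lc(1) Bc(1)] by simp
  also have "\<dots> = ?B"
    using LL' S.ideal_prod_comm[OF Lc] S.ideal_prod_subring_left[OF image_subring image_carrier_rsubmodule]
    by simp
  finally show "L \<subseteq> ?B" "L' \<subseteq> ?B"
    using S.ideal_prod_unit_subset[OF _ Bc] Lc LB by auto
qed

text \<open>The lifting procedure applies modulo the ideal generated by the finitely many
  kernel elements below, which is nilpotent because the kernel is nil.\<close>

lemma lift_dual_pair_mod_kernel:
  fixes n :: nat
  assumes c: "\<And>k. k < n \<Longrightarrow> x k \<in> carrier R \<and> y k \<in> carrier R"
    and a: "\<And>l k. l < n \<Longrightarrow> k < n \<Longrightarrow> a l k \<in> K \<and> h (x l \<otimes> y k \<ominus> a l k) = \<zero>\<^bsub>S\<^esub>"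
    and sum: "h ((\<Oplus>k\<in>{..<n}. x k \<otimes> y k) \<ominus> \<one>) = \<zero>\<^bsub>S\<^esub>"
  shows "\<exists>U V. (\<forall>k<n. U k \<in> carrier R \<and> V k \<in> carrier R \<and> h (U k) = h (x k)) \<and>
    (\<forall>l<n. \<forall>k<n. U l \<otimes> V k \<in> K) \<and> (\<Oplus>k\<in>{..<n}. U k \<otimes> V k) = \<one>"
proof -
  have ac: "a l k \<in> carrier R" if "l < n" "k < n" for l k
    using a[OF that] subringE(1)[OF subring] by auto
  define E where "E = (\<lambda>(l, k). x l \<otimes> y k \<ominus> a l k) ` ({..<n} \<times> {..<n}) \<union>
    {(\<Oplus>k\<in>{..<n}. x k \<otimes> y k) \<ominus> \<one>}"
  have Ec: "E \<subseteq> carrier R"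
    unfolding E_def using c ac by (auto intro!: R.minus_closed R.finsum_closed)
  have Ef: "finite E" unfolding E_def by simp
  have E0: "\<And>e. e \<in> E \<Longrightarrow> h e = \<zero>\<^bsub>S\<^esub>" unfolding E_def using a sum by auto
  obtain p :: nat where p: "\<forall>e\<in>E. e [^] p = \<zero>"
    using R.nilpotent_common_exponent[OF Ef Ec] kernel_nil E0 Ec by blast
  have "inv (\<one> \<oplus> r) \<in> K" if "r \<in> K" "r \<in> power_ideal R E 1" for r
    using inv_one_plus_nilpotent R.power_ideal_nilpotent[OF Ec Ef] p that by blast
  then interpret lifting: nilpotent_lifting R K E p
    using p by (intro nilpotent_lifting.intro nilpotent_lifting_axioms.intro R.is_cring subring Ec Ef) auto
  have J1: "e \<in> lifting.J 1" if "e \<in> E" for e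
    using R.generator_in_power_ideal[OF Ec that] .
  have "x l \<otimes> y k \<in> lifting.K_plus_J 1" if lk: "l < n" "k < n" for l k
  proof -
    have "a l k \<in> carrier R" "x l \<in> carrier R" "y k \<in> carrier R"
      using c lk ac[OF lk] by auto
    then have "x l \<otimes> y k = a l k \<oplus> (x l \<otimes> y k \<ominus> a l k)" by algebra
    moreover have "x l \<otimes> y k \<ominus> a l k \<in> E"
      unfolding E_def using lk by (auto intro!: image_eqI[of _ _ "(l, k)"])
    ultimately show ?thesis
      using lifting.K_plus_J_closed(1-3) a[OF lk] J1 by metis
  qed
  moreover have "(\<Oplus>k\<in>{..<n}. x k \<otimes> y k) \<ominus> \<one> \<in> lifting.J 1" using J1 unfolding E_def by blast
  ultimately obtain U V
    where UV: "\<forall>k<n. U k \<in> carrier R \<and> V k \<in> carrier R \<and> U k \<ominus> x k \<in> lifting.J 1 \<and> V k \<ominus> y k \<in> lifting.J 1"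
      "\<forall>l<n. \<forall>k<n. U l \<otimes> V k \<in> K" "(\<Oplus>k\<in>{..<n}. U k \<otimes> V k) = \<one>"
    using lifting.lift_dual_pair[of n x y] c by blast
  have "h (U k) = h (x k)" if k: "k < n" for k
    using hom_eq_of_minus_zero power_ideal_in_kernel[OF Ec E0] UV(1) c k by metis
  with UV show ?thesis by blast
qed

lemma lift_dual_basis:
  fixes n :: nat
  assumes fg: "\<And>k. k < n \<Longrightarrow> f k \<in> h ` carrier R \<and> g k \<in> h ` carrier R"
    and prods: "\<And>l k. l < n \<Longrightarrow> k < n \<Longrightarrow> f l \<otimes>\<^bsub>S\<^esub> g k \<in> h ` K"
    and sum: "\<one>\<^bsub>S\<^esub> = (\<Oplus>\<^bsub>S\<^esub>k\<in>{..<n}. f k \<otimes>\<^bsub>S\<^esub> g k)"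
  shows "\<exists>U V. (\<forall>k<n. U k \<in> carrier R \<and> V k \<in> carrier R \<and> h (U k) = f k) \<and>
    (\<forall>l<n. \<forall>k<n. U l \<otimes> V k \<in> K) \<and> (\<Oplus>k\<in>{..<n}. U k \<otimes> V k) = \<one>"
proof -
  define x where "x k = inv_into (carrier R) h (f k)" for k
  define y where "y k = inv_into (carrier R) h (g k)" for k
  have c: "\<And>k. k < n \<Longrightarrow> x k \<in> carrier R \<and> y k \<in> carrier R"
    and hxy: "\<And>k. k < n \<Longrightarrow> h (x k) = f k \<and> h (y k) = g k"
    unfolding x_def y_def using fg by (auto simp: inv_into_into f_inv_into_f)
  have "\<exists>a\<in>K. h a = h (x l \<otimes> y k)" if lk: "l < n" "k < n" for l k
    using c hxy lk prods[OF lk] by auto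
  then obtain a where a: "\<And>l k. l < n \<Longrightarrow> k < n \<Longrightarrow> a l k \<in> K \<and> h (a l k) = h (x l \<otimes> y k)"
    by metis
  have "h (x l \<otimes> y k \<ominus> a l k) = \<zero>\<^bsub>S\<^esub>" if "l < n" "k < n" for l k
    using a[OF that] c that subringE(1)[OF subring] by (auto simp: a_minus_def subsetD S.r_neg)
  moreover have "h (\<Oplus>k\<in>{..<n}. x k \<otimes> y k) = (\<Oplus>\<^bsub>S\<^esub>k\<in>{..<n}. f k \<otimes>\<^bsub>S\<^esub> g k)"
    using c hxy hom_finsum[of "\<lambda>k. x k \<otimes> y k" "{..<n}"]
    by (simp add: Pi_def comp_def) (intro S.finsum_cong', auto, metis S.m_closed hom_closed)
  then have "h ((\<Oplus>k\<in>{..<n}. x k \<otimes> y k) \<ominus> \<one>) = \<zero>\<^bsub>S\<^esub>"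
    using sum[symmetric] c by (simp add: a_minus_def R.finsum_closed Pi_def S.r_neg)
  ultimately show ?thesis
    using lift_dual_pair_mod_kernel[of n x y a] c a hxy by auto
qed

lemma lift_invertible:
  assumes L: "L \<in> invertible_ideals S (h ` K)"
    and LB: "ideal_prod S L (h ` carrier R) = h ` carrier R"
  shows "\<exists>M \<in> invertible_ideals R K. h ` M = L"
proof -
  have Kc: "K \<subseteq> carrier R" using subringE(1)[OF subring] .
  obtain L' where L': "rsubmodule S (h ` K) L" "rsubmodule S (h ` K) L'" "ideal_prod S L L' = h ` K"
    using L unfolding invertible_ideals_def by auto
  have Lc: "L \<subseteq> carrier S" "L' \<subseteq> carrier S" using L' S.rsubmodule_carrier by auto
  have "\<one>\<^bsub>S\<^esub> \<in> ideal_prod S L L'" using L'(3) subringE(3)[OF image_subring] by simp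
  then obtain n :: nat and f g where fg: "\<And>k. k < n \<Longrightarrow> f k \<in> L \<and> g k \<in> L'"
    and sum: "\<one>\<^bsub>S\<^esub> = (\<Oplus>\<^bsub>S\<^esub>k\<in>{..<n}. f k \<otimes>\<^bsub>S\<^esub> g k)"
    unfolding S.ideal_prod_iff by blast
  have "f l \<otimes>\<^bsub>S\<^esub> g k \<in> h ` K" if "l < n" "k < n" for l k
    using S.mult_in_ideal_prod[OF Lc] fg that L'(3) by blast
  then obtain U V where UV: "\<forall>k<n. U k \<in> carrier R \<and> V k \<in> carrier R \<and> h (U k) = f k"
      "\<forall>l<n. \<forall>k<n. U l \<otimes> V k \<in> K" "(\<Oplus>k\<in>{..<n}. U k \<otimes> V k) = \<one>"
    using lift_dual_basis[OF _ _ sum] fg invertible_subset_image[OF L' LB] by blast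
  define M where "M = ideal_prod R K (U ` {..<n})"
  have "M \<in> invertible_ideals R K"
    unfolding M_def using R.invertible_of_dual_pair[OF subring _ _ UV(3)] UV(1,2) by blast
  moreover have "h ` M = L"
  proof -
    have "U ` {..<n} \<subseteq> carrier R" using UV(1) by auto
    then have "h ` M = ideal_prod S (h ` K) (h ` U ` {..<n})"
      unfolding M_def using R.ring_hom_image_ideal_prod[OF S.is_cring homh Kc] by blast
    also have "h ` U ` {..<n} = f ` {..<n}" using UV(1) by (auto simp: image_image)
    finally show ?thesis
      using S.invertible_ideal_generated[OF image_subring L' fg sum[symmetric]] by simp
  qed
  ultimately show ?thesis by blast
qed

lemma lift_modulo_principal:
  assumes L: "L \<in> invertible_ideals S (h ` K)"
    and y: "y \<in> Units S" "ideal_prod S L (h ` carrier R) = S.principal_ideal (h ` carrier R) y"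
  shows "\<exists>M \<in> invertible_ideals R K.
    L \<in> principal_ideals S (h ` K) #>\<^bsub>inv_group S (h ` K)\<^esub> h ` M"
proof -
  let ?B = "h ` carrier R" and ?G = "inv_group S (h ` K)"
  interpret G: comm_group ?G using S.comm_group_inv_group[OF image_subring] .
  have Bc: "?B \<subseteq> carrier S" using subringE(1)[OF image_carrier_subring] .
  have yc: "y \<in> carrier S" "inv\<^bsub>S\<^esub> y \<in> carrier S" using y(1) by auto
  define P where "P = S.principal_ideal (h ` K) (inv\<^bsub>S\<^esub> y)"
  have P: "P \<in> invertible_ideals S (h ` K)"
    unfolding P_def using S.principal_ideal_invertible[OF image_subring] y(1) by simp
  have Lc: "L \<subseteq> carrier S" "P \<subseteq> carrier S" using L P S.invertible_ideal_carrier by auto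
  define L1 where "L1 = ideal_prod S L P"
  have L1: "L1 \<in> invertible_ideals S (h ` K)"
    unfolding L1_def using G.m_closed[of L P] L P by simp
  have "ideal_prod S L1 ?B = ideal_prod S (ideal_prod S L ?B) (ideal_prod S P ?B)"
    unfolding L1_def using S.ideal_prod_swap[OF Lc Bc Bc] S.ideal_prod_subring_self[OF image_carrier_subring]
    by simp
  also have "\<dots> = ?B"
    unfolding y(2) P_def
    using S.principal_ideal_extend[OF image_subring image_carrier_subring image_subset yc(2)]
      S.ideal_prod_principal_ideal[OF image_carrier_subring image_carrier_subring order_refl yc]
      S.principal_ideal_one[OF image_carrier_subring] y(1)
    by simp
  finally obtain M where M: "M \<in> invertible_ideals R K" "h ` M = L1"
    using lift_invertible[OF L1] by blast
  have "ideal_prod S (S.principal_ideal (h ` K) y) L1 = ideal_prod S L (ideal_prod S (S.principal_ideal (h ` K) y) P)"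
    unfolding L1_def using S.rsubmodule_principal_ideal[OF image_subring yc(1)] S.rsubmodule_carrier Lc
    by (metis S.ideal_prod_comm S.ideal_prod_mult_assoc)
  also have "\<dots> = L"
    unfolding P_def using S.ideal_prod_principal_ideal[OF image_subring image_subring order_refl yc] y(1)
      S.principal_ideal_one[OF image_subring] S.ideal_prod_subring_right[OF image_subring]
      S.invertible_ideal_rsubmodule[OF L]
    by simp
  finally have "L = S.principal_ideal (h ` K) y \<otimes>\<^bsub>?G\<^esub> h ` M" using M(2) by simp
  moreover have "S.principal_ideal (h ` K) y \<in> principal_ideals S (h ` K)"
    using y(1) unfolding S.principal_ideals_eq by auto
  ultimately show ?thesis using M(1) unfolding r_coset_def by blast
qed

lemma quotient_hom_image:
  "quotient_hom (inv_group R K) (inv_group S (h ` K))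
    (principal_ideals R K) (principal_ideals S (h ` K)) (induced_ideal S (h ` K) h)"
  by (intro quotient_hom.intro quotient_hom_axioms.intro R.comm_group_inv_group S.comm_group_inv_group
      R.subgroup_principal_ideals S.subgroup_principal_ideals induced_ideal_hom induced_ideal_principal
      subring image_subring)

lemma quotient_hom_extension:
  "quotient_hom (inv_group S (h ` K)) (inv_group S (h ` carrier R))
    (principal_ideals S (h ` K)) (principal_ideals S (h ` carrier R)) (induced_ideal S (h ` carrier R) id)"
  by (intro quotient_hom.intro quotient_hom_axioms.intro S.comm_group_inv_group
      S.subgroup_principal_ideals S.extension_hom S.extension_principal
      image_subring image_carrier_subring image_subset)

lemma extension_of_image_principal:
  assumes M: "M \<in> invertible_ideals R K"
  shows "induced_ideal S (h ` carrier R) id (induced_ideal S (h ` K) h M) \<in> principal_ideals S (h ` carrier R)"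
proof -
  have "induced_ideal S (h ` carrier R) id (induced_ideal S (h ` K) h M) = h ` ideal_prod R M (carrier R)"
    using M induced_ideal_image[OF subring] R.invertible_ideal_rsubmodule R.invertible_ideal_carrier
      R.ring_hom_image_ideal_prod[OF S.is_cring homh]
    unfolding induced_ideal_def by simp
  also have "\<dots> = S.principal_ideal (h ` carrier R) \<one>\<^bsub>S\<^esub>"
    using R.invertible_ideal_prod_carrier[OF subring M] S.principal_ideal_one[OF image_carrier_subring]
    by simp
  finally show ?thesis unfolding S.principal_ideals_eq by blast
qed

theorem class_group_exact:
  "\<exists>f g. f \<in> hom (class_group R K) (class_group S (h ` K)) \<and>
     g \<in> hom (class_group S (h ` K)) (class_group S (h ` carrier R)) \<and>
     (\<forall>L \<in> invertible_ideals R K.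
        f (ideal_class R K L) = ideal_class S (h ` K) (induced_ideal S (h ` K) h L)) \<and>
     (\<forall>L \<in> invertible_ideals S (h ` K).
        g (ideal_class S (h ` K) L) =
        ideal_class S (h ` carrier R) (induced_ideal S (h ` carrier R) id L)) \<and>
     inj_on f (carrier (class_group R K)) \<and>
     f ` carrier (class_group R K) = kernel (class_group S (h ` K)) (class_group S (h ` carrier R)) g"
proof -
  interpret f: quotient_hom "inv_group R K" "inv_group S (h ` K)"
    "principal_ideals R K" "principal_ideals S (h ` K)" "induced_ideal S (h ` K) h"
    by (rule quotient_hom_image)
  interpret g: quotient_hom "inv_group S (h ` K)" "inv_group S (h ` carrier R)"
    "principal_ideals S (h ` K)" "principal_ideals S (h ` carrier R)" "induced_ideal S (h ` carrier R) id"
    by (rule quotient_hom_extension)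
  have inj: "L \<in> principal_ideals R K"
    if "L \<in> carrier (inv_group R K)" "induced_ideal S (h ` K) h L \<in> principal_ideals S (h ` K)" for L
    using that principal_of_image_principal induced_ideal_image[OF subring]
      R.invertible_ideal_rsubmodule unfolding S.principal_ideals_eq by auto
  have lift: "\<exists>M\<in>carrier (inv_group R K). L \<in> principal_ideals S (h ` K) #>\<^bsub>inv_group S (h ` K)\<^esub>
      induced_ideal S (h ` K) h M"
    if "L \<in> carrier (inv_group S (h ` K))"
      "induced_ideal S (h ` carrier R) id L \<in> principal_ideals S (h ` carrier R)" for L
    using that lift_modulo_principal induced_ideal_image[OF subring] R.invertible_ideal_rsubmodule
    unfolding S.principal_ideals_eq induced_ideal_def[of S "h ` carrier R" id] by fastforce
  have "f.qmap ` carrier (inv_group R K Mod principal_ideals R K) =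
      kernel (inv_group S (h ` K) Mod principal_ideals S (h ` K))
        (inv_group S (h ` carrier R) Mod principal_ideals S (h ` carrier R)) g.qmap"
    using quotient_hom_exact[OF quotient_hom_image quotient_hom_extension _ lift]
      extension_of_image_principal by simp
  then show ?thesis
    unfolding class_group_def ideal_class_def
    using f.qmap_hom g.qmap_hom f.qmap_rcos g.qmap_rcos f.qmap_inj_on[OF inj]
    by (intro exI[of _ f.qmap] exI[of _ g.qmap] conjI ballI) simp_all
qed

end

section \<open>Total rings of fractions and the reduction map\<close>

context cring
begin

lemma inv_mult_Units: "u \<in> Units R \<Longrightarrow> v \<in> Units R \<Longrightarrow> inv (u \<otimes> v) = inv u \<otimes> inv v"
  by (rule comm_inv_char) (auto simp: m_ac Units_closed)

lemma frac_eq_iff: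
  assumes u: "u \<in> Units R" and v: "v \<in> Units R" and x: "x \<in> carrier R" and y: "y \<in> carrier R"
  shows "x \<otimes> inv u = y \<otimes> inv v \<longleftrightarrow> x \<otimes> v = y \<otimes> u"
proof -
  have c: "u \<in> carrier R" "v \<in> carrier R" "inv u \<in> carrier R" "inv v \<in> carrier R" using u v by auto
  have "(x \<otimes> inv u) \<otimes> (u \<otimes> v) = x \<otimes> (inv u \<otimes> u) \<otimes> v"
    "(y \<otimes> inv v) \<otimes> (u \<otimes> v) = y \<otimes> (inv v \<otimes> v) \<otimes> u"
    "(x \<otimes> v) \<otimes> (inv u \<otimes> inv v) = x \<otimes> inv u \<otimes> (v \<otimes> inv v)"
    "(y \<otimes> u) \<otimes> (inv u \<otimes> inv v) = y \<otimes> inv v \<otimes> (u \<otimes> inv u)"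
    using c x y by (simp_all add: m_ac)
  then have "x \<otimes> v = (x \<otimes> inv u) \<otimes> (u \<otimes> v)" "y \<otimes> u = (y \<otimes> inv v) \<otimes> (u \<otimes> v)"
    "x \<otimes> inv u = (x \<otimes> v) \<otimes> (inv u \<otimes> inv v)" "y \<otimes> inv v = (y \<otimes> u) \<otimes> (inv u \<otimes> inv v)"
    using u v c x y by simp_all
  then show ?thesis by metis
qed

lemma frac_mult:
  assumes "u \<in> Units R" "v \<in> Units R" "x \<in> carrier R" "y \<in> carrier R"
  shows "(x \<otimes> inv u) \<otimes> (y \<otimes> inv v) = (x \<otimes> y) \<otimes> inv (u \<otimes> v)"
  using assms inv_mult_Units by (simp add: m_ac)

lemma frac_add:
  assumes u: "u \<in> Units R" and v: "v \<in> Units R" and x: "x \<in> carrier R" and y: "y \<in> carrier R"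
  shows "(x \<otimes> inv u) \<oplus> (y \<otimes> inv v) = (x \<otimes> v \<oplus> y \<otimes> u) \<otimes> inv (u \<otimes> v)"
proof -
  have c: "u \<in> carrier R" "v \<in> carrier R" "inv u \<in> carrier R" "inv v \<in> carrier R" using u v by auto
  have "(x \<otimes> v \<oplus> y \<otimes> u) \<otimes> (inv u \<otimes> inv v) =
      x \<otimes> inv u \<otimes> (v \<otimes> inv v) \<oplus> y \<otimes> inv v \<otimes> (u \<otimes> inv u)"
    using c x y by algebra
  then show ?thesis using u v c x y inv_mult_Units by simp
qed

end

locale fraction_ring = A: cring A + T: cring T for A (structure) and T +
  fixes i W
  assumes hom: "i \<in> ring_hom A T" and inj: "inj_on i (carrier A)"
    and mult_closed: "W \<subseteq> carrier A" "\<one> \<in> W" "\<And>s t. s \<in> W \<Longrightarrow> t \<in> W \<Longrightarrow> s \<otimes> t \<in> W"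
    and Units: "\<And>s. s \<in> W \<Longrightarrow> i s \<in> Units T"
    and frac: "\<And>x. x \<in> carrier T \<Longrightarrow> \<exists>a\<in>carrier A. \<exists>s\<in>W. x = i a \<otimes>\<^bsub>T\<^esub> inv\<^bsub>T\<^esub> (i s)"
begin

context
  fixes T' \<psi>
  assumes T': "cring T'" and \<psi>: "\<psi> \<in> ring_hom A T'" and \<psi>_Units: "\<And>s. s \<in> W \<Longrightarrow> \<psi> s \<in> Units T'"
begin

interpretation T': cring T' by (rule T')

lemma lift_well_defined:
  assumes "a \<in> carrier A" "b \<in> carrier A" "s \<in> W" "t \<in> W"
    and "i a \<otimes>\<^bsub>T\<^esub> inv\<^bsub>T\<^esub> (i s) = i b \<otimes>\<^bsub>T\<^esub> inv\<^bsub>T\<^esub> (i t)"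
  shows "\<psi> a \<otimes>\<^bsub>T'\<^esub> inv\<^bsub>T'\<^esub> (\<psi> s) = \<psi> b \<otimes>\<^bsub>T'\<^esub> inv\<^bsub>T'\<^esub> (\<psi> t)"
proof -
  have st: "s \<in> carrier A" "t \<in> carrier A" using assms mult_closed(1) by auto
  have "i (a \<otimes> t) = i (b \<otimes> s)"
    using T.frac_eq_iff[OF Units Units] assms st ring_hom_memE[OF hom] by auto
  then have "a \<otimes> t = b \<otimes> s" using inj assms st inj_onD by (metis A.m_closed)
  then have "\<psi> a \<otimes>\<^bsub>T'\<^esub> \<psi> t = \<psi> b \<otimes>\<^bsub>T'\<^esub> \<psi> s" using ring_hom_memE[OF \<psi>] assms st by metis
  then show ?thesis using T'.frac_eq_iff[OF \<psi>_Units \<psi>_Units] assms st ring_hom_memE[OF \<psi>] by auto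
qed

lemma ring_hom_of_fractions:
  assumes \<phi>: "\<And>a s. a \<in> carrier A \<Longrightarrow> s \<in> W \<Longrightarrow>
    \<phi> (i a \<otimes>\<^bsub>T\<^esub> inv\<^bsub>T\<^esub> (i s)) = \<psi> a \<otimes>\<^bsub>T'\<^esub> inv\<^bsub>T'\<^esub> (\<psi> s)"
  shows "\<phi> \<in> ring_hom T T'"
proof (rule ring_hom_memI)
  note iE = ring_hom_memE[OF hom] and \<psi>E = ring_hom_memE[OF \<psi>]
  fix x assume "x \<in> carrier T"
  then obtain a s where "a \<in> carrier A" "s \<in> W" "x = i a \<otimes>\<^bsub>T\<^esub> inv\<^bsub>T\<^esub> (i s)" using frac by blast
  then show "\<phi> x \<in> carrier T'" using \<phi> \<psi>E \<psi>_Units by auto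
next
  note iE = ring_hom_memE[OF hom] and \<psi>E = ring_hom_memE[OF \<psi>]
  fix x y assume "x \<in> carrier T" "y \<in> carrier T"
  then obtain a s b t where as: "a \<in> carrier A" "s \<in> W" "x = i a \<otimes>\<^bsub>T\<^esub> inv\<^bsub>T\<^esub> (i s)"
    and bt: "b \<in> carrier A" "t \<in> W" "y = i b \<otimes>\<^bsub>T\<^esub> inv\<^bsub>T\<^esub> (i t)"
    using frac by meson
  have c: "s \<in> carrier A" "t \<in> carrier A" "s \<otimes> t \<in> W" using as bt mult_closed by auto
  show "\<phi> (x \<otimes>\<^bsub>T\<^esub> y) = \<phi> x \<otimes>\<^bsub>T'\<^esub> \<phi> y"
    using T.frac_mult[OF Units[OF as(2)] Units[OF bt(2)]] T'.frac_mult[OF \<psi>_Units[OF as(2)] \<psi>_Units[OF bt(2)]]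
      \<phi>[of "a \<otimes> b" "s \<otimes> t"] \<phi> as bt c iE \<psi>E by simp
  show "\<phi> (x \<oplus>\<^bsub>T\<^esub> y) = \<phi> x \<oplus>\<^bsub>T'\<^esub> \<phi> y"
    using T.frac_add[OF Units[OF as(2)] Units[OF bt(2)]] T'.frac_add[OF \<psi>_Units[OF as(2)] \<psi>_Units[OF bt(2)]]
      \<phi>[of "a \<otimes> t \<oplus> b \<otimes> s" "s \<otimes> t"] \<phi> as bt c iE \<psi>E by simp
next
  show "\<phi> \<one>\<^bsub>T\<^esub> = \<one>\<^bsub>T'\<^esub>"
    using assms[of \<one> \<one>] mult_closed(2) ring_hom_memE[OF hom] ring_hom_memE[OF \<psi>] by simp
qed

theorem lift_ring_hom: "\<exists>\<phi>. \<phi> \<in> ring_hom T T' \<and> (\<forall>a\<in>carrier A. \<phi> (i a) = \<psi> a)"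
proof -
  let ?fr = "\<lambda>a s. i a \<otimes>\<^bsub>T\<^esub> inv\<^bsub>T\<^esub> (i s)" and ?fr' = "\<lambda>a s. \<psi> a \<otimes>\<^bsub>T'\<^esub> inv\<^bsub>T'\<^esub> (\<psi> s)"
  define \<phi> where "\<phi> x = (SOME y. \<exists>a\<in>carrier A. \<exists>s\<in>W. x = ?fr a s \<and> y = ?fr' a s)" for x
  have \<phi>_frac: "\<phi> (?fr a s) = ?fr' a s" if as: "a \<in> carrier A" "s \<in> W" for a s
    unfolding \<phi>_def
  proof (rule someI2[of _ "?fr' a s"])
    show "\<exists>a'\<in>carrier A. \<exists>s'\<in>W. ?fr a s = ?fr a' s' \<and> ?fr' a s = ?fr' a' s'" using as by blast
    show "y = ?fr' a s" if "\<exists>a'\<in>carrier A. \<exists>s'\<in>W. ?fr a s = ?fr a' s' \<and> y = ?fr' a' s'" for y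
      using that lift_well_defined as by metis
  qed
  moreover have "\<phi> (i a) = \<psi> a" if "a \<in> carrier A" for a
    using \<phi>_frac[OF that mult_closed(2)] that ring_hom_memE[OF hom] ring_hom_memE[OF \<psi>] by simp
  ultimately show ?thesis using ring_hom_of_fractions by blast
qed

end

end

context cring
begin

lemma nzd_carrier: "s \<in> nzd R \<Longrightarrow> s \<in> carrier R"
  unfolding nzd_def by auto

lemma one_nzd: "\<one> \<in> nzd R"
  unfolding nzd_def by auto

lemma nzd_mult:
  assumes s: "s \<in> nzd R" and t: "t \<in> nzd R"
  shows "s \<otimes> t \<in> nzd R"
proof -
  have sc: "s \<in> carrier R" and tc: "t \<in> carrier R" using s t nzd_carrier by auto
  have "a = \<zero>" if a: "a \<in> carrier R" "a \<otimes> (s \<otimes> t) = \<zero>" for a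
  proof -
    have "(a \<otimes> s) \<otimes> t = \<zero>" using a sc tc by (simp add: m_assoc)
    then have "a \<otimes> s = \<zero>" using t a(1) sc unfolding nzd_def by blast
    then show ?thesis using s a(1) unfolding nzd_def by blast
  qed
  then show ?thesis using sc tc unfolding nzd_def by blast
qed

lemma nzd_pow: "s \<in> nzd R \<Longrightarrow> s [^] (m::nat) \<in> nzd R"
  by (induction m) (simp_all add: one_nzd nzd_mult)

lemma cring_reduced_ring: "cring (reduced_ring R)"
  unfolding reduced_ring_def using ideal.quotient_is_cring[OF nilradical_ideal is_cring] .

lemma reduction_ring_hom: "(\<lambda>a. nilradical R +> a) \<in> ring_hom R (reduced_ring R)"
  unfolding reduced_ring_def using ideal.rcos_ring_hom[OF nilradical_ideal] .

lemma carrier_reduced_ring: "carrier (reduced_ring R) = (\<lambda>a. nilradical R +> a) ` carrier R"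
  unfolding reduced_ring_def FactRing_def by (auto simp: A_RCOSETS_def')

lemma reduction_eq_zero_iff:
  "a \<in> carrier R \<Longrightarrow> nilradical R +> a = \<zero>\<^bsub>reduced_ring R\<^esub> \<longleftrightarrow> a \<in> nilradical R"
  unfolding reduced_ring_def FactRing_def
  using ideal.rcos_const_imp_mem[OF nilradical_ideal] a_rcos_zero[OF nilradical_ideal] by auto

lemma reduction_nzd:
  assumes s: "s \<in> nzd R"
  shows "nilradical R +> s \<in> nzd (reduced_ring R)"
proof -
  interpret Q: ring "reduced_ring R" using cring_reduced_ring cring.axioms(1) by blast
  have sc: "s \<in> carrier R" using nzd_carrier[OF s] .
  have "x = \<zero>\<^bsub>reduced_ring R\<^esub>"
    if x: "x \<in> carrier (reduced_ring R)" "x \<otimes>\<^bsub>reduced_ring R\<^esub> (nilradical R +> s) = \<zero>\<^bsub>reduced_ring R\<^esub>" for x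
  proof -
    obtain a where a: "a \<in> carrier R" "x = nilradical R +> a" using x(1) carrier_reduced_ring by auto
    then have "a \<otimes> s \<in> nilradical R"
      using x(2) ring_hom_mult[OF reduction_ring_hom a(1) sc] reduction_eq_zero_iff sc by simp
    then obtain m :: nat where "(a \<otimes> s) [^] m = \<zero>" unfolding nilradical_def by auto
    then have "a [^] m \<otimes> s [^] m = \<zero>" using pow_mult_distrib[of a s m] a sc m_comm by simp
    then have "a [^] m = \<zero>" using nzd_pow[OF s, of m] a unfolding nzd_def by auto
    then show ?thesis using a reduction_eq_zero_iff unfolding nilradical_def by auto
  qed
  moreover have "nilradical R +> s \<in> carrier (reduced_ring R)" using carrier_reduced_ring sc by auto
  ultimately show ?thesis unfolding nzd_def by auto
qed

end

lemma fraction_ring_total: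
  "cring A \<Longrightarrow> total_ring_of_fractions A T i \<Longrightarrow> fraction_ring A T i (nzd A)"
  unfolding total_ring_of_fractions_def
  by (intro fraction_ring.intro fraction_ring_axioms.intro)
    (auto simp: cring.nzd_carrier cring.one_nzd cring.nzd_mult)

lemma reduction_hom_exists:
  assumes A: "cring A" and T: "total_ring_of_fractions A TA i"
    and T': "total_ring_of_fractions (reduced_ring A) TAred j"
  shows "\<exists>\<phi>. \<phi> \<in> ring_hom TA TAred \<and> (\<forall>a \<in> carrier A. \<phi> (i a) = j (nilradical A +>\<^bsub>A\<^esub> a))"
proof (rule fraction_ring.lift_ring_hom[OF fraction_ring_total[OF A T]])
  interpret A: cring A by fact
  show "(\<lambda>a. j (nilradical A +>\<^bsub>A\<^esub> a)) \<in> ring_hom A TAred"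
    using ring_hom_trans[OF A.reduction_ring_hom, of j TAred] T'
    unfolding total_ring_of_fractions_def by (simp add: comp_def)
  show "j (nilradical A +>\<^bsub>A\<^esub> s) \<in> Units TAred" if "s \<in> nzd A" for s
    using T' A.reduction_nzd[OF that] unfolding total_ring_of_fractions_def by auto
qed (use T' in \<open>simp add: total_ring_of_fractions_def\<close>)

locale reduction_of_fractions =
  fixes A :: "('a, 'm) ring_scheme" and TA :: "('b, 'n) ring_scheme" and i :: "'a \<Rightarrow> 'b"
    and TAred :: "('c, 'o) ring_scheme" and j :: "'a set \<Rightarrow> 'c" and \<phi> :: "'b \<Rightarrow> 'c"
  assumes cring: "cring A" and fractions: "total_ring_of_fractions A TA i"
    and fractions_reduced: "total_ring_of_fractions (reduced_ring A) TAred j"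
    and hom: "\<phi> \<in> ring_hom TA TAred"
    and hom_reduction: "\<forall>a \<in> carrier A. \<phi> (i a) = j (nilradical A +>\<^bsub>A\<^esub> a)"
begin

sublocale A: cring A by (rule cring)

sublocale h: ring_hom_cring TA TAred \<phi>
  using hom fractions fractions_reduced
  by (simp add: total_ring_of_fractions_def ring_hom_cring_def ring_hom_cring_axioms_def)

sublocale i: fraction_ring A TA i "nzd A" by (rule fraction_ring_total[OF cring fractions])

sublocale i: ring_hom_cring A TA i
  using i.hom by unfold_locales

sublocale j: ring_hom_cring "reduced_ring A" TAred j
  using fractions_reduced A.cring_reduced_ring
  by (simp add: total_ring_of_fractions_def ring_hom_cring_def ring_hom_cring_axioms_def)

lemma image_reduction: "j ` carrier (reduced_ring A) = \<phi> ` i ` carrier A"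
  using hom_reduction A.carrier_reduced_ring by (auto simp: image_image)

lemma hom_eq_zero_iff: "a \<in> carrier A \<Longrightarrow> \<phi> (i a) = \<zero>\<^bsub>TAred\<^esub> \<longleftrightarrow> a \<in> nilradical A"
proof -
  assume a: "a \<in> carrier A"
  have "inj_on j (carrier (reduced_ring A))"
    using fractions_reduced unfolding total_ring_of_fractions_def by blast
  moreover have "nilradical A +>\<^bsub>A\<^esub> a \<in> carrier (reduced_ring A)"
    using a A.carrier_reduced_ring by auto
  ultimately have "j (nilradical A +>\<^bsub>A\<^esub> a) = \<zero>\<^bsub>TAred\<^esub> \<longleftrightarrow> nilradical A +>\<^bsub>A\<^esub> a = \<zero>\<^bsub>reduced_ring A\<^esub>"
    using j.hom_zero j.R.zero_closed inj_onD by metis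
  then show ?thesis using hom_reduction a A.reduction_eq_zero_iff by simp
qed

lemma kernel_nil:
  assumes x: "x \<in> carrier TA" "\<phi> x = \<zero>\<^bsub>TAred\<^esub>"
  shows "\<exists>m::nat. x [^]\<^bsub>TA\<^esub> m = \<zero>\<^bsub>TA\<^esub>"
proof -
  obtain a s where as: "a \<in> carrier A" "s \<in> nzd A" "x = i a \<otimes>\<^bsub>TA\<^esub> inv\<^bsub>TA\<^esub> (i s)"
    using i.frac[OF x(1)] by blast
  have su: "i s \<in> Units TA" using i.Units[OF as(2)] .
  have "\<phi> (i a) \<otimes>\<^bsub>TAred\<^esub> \<phi> (inv\<^bsub>TA\<^esub> (i s)) = \<zero>\<^bsub>TAred\<^esub>" using x as su by simp
  moreover have "\<phi> (inv\<^bsub>TA\<^esub> (i s)) \<in> Units TAred" using h.hom_Units su by simp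
  ultimately have "\<phi> (i a) = \<zero>\<^bsub>TAred\<^esub>"
    using as(1) by (metis h.S.Units_r_inv h.S.m_assoc h.S.r_one h.S.l_null h.S.Units_closed
        h.S.Units_inv_closed h.hom_closed i.hom_closed)
  then obtain m :: nat where "a [^]\<^bsub>A\<^esub> m = \<zero>\<^bsub>A\<^esub>"
    using hom_eq_zero_iff as(1) unfolding nilradical_def by auto
  then have "i a [^]\<^bsub>TA\<^esub> m = \<zero>\<^bsub>TA\<^esub>"
    using i.ring.hom_nat_pow[OF as(1), of m] by (simp del: i.ring.hom_nat_pow)
  then have "x [^]\<^bsub>TA\<^esub> m = \<zero>\<^bsub>TA\<^esub>"
    using h.R.nilpotent_mult[of "i a" m "inv\<^bsub>TA\<^esub> (i s)"] as su h.R.m_comm by auto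
  then show ?thesis by blast
qed

lemma inv_one_plus_nilpotent:
  assumes r: "r \<in> i ` carrier A" "r [^]\<^bsub>TA\<^esub> (m::nat) = \<zero>\<^bsub>TA\<^esub>"
  shows "inv\<^bsub>TA\<^esub> (\<one>\<^bsub>TA\<^esub> \<oplus>\<^bsub>TA\<^esub> r) \<in> i ` carrier A"
proof -
  obtain a where a: "a \<in> carrier A" "r = i a" using r by auto
  have "i (a [^]\<^bsub>A\<^esub> m) = i \<zero>\<^bsub>A\<^esub>" using i.ring.hom_nat_pow[OF a(1)] r a by simp
  then have "a [^]\<^bsub>A\<^esub> m = \<zero>\<^bsub>A\<^esub>" using i.inj a(1) inj_onD by fastforce
  then have u: "\<one>\<^bsub>A\<^esub> \<oplus>\<^bsub>A\<^esub> a \<in> Units A" using A.one_plus_nilpotent_Units a(1) by blast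
  then have "i (inv\<^bsub>A\<^esub> (\<one>\<^bsub>A\<^esub> \<oplus>\<^bsub>A\<^esub> a)) = inv\<^bsub>TA\<^esub> (\<one>\<^bsub>TA\<^esub> \<oplus>\<^bsub>TA\<^esub> r)"
    using i.hom_Units a by simp
  then show ?thesis using u by (metis A.Units_inv_closed imageI)
qed

sublocale nil_kernel_hom TA TAred \<phi> "i ` carrier A"
  using kernel_nil inv_one_plus_nilpotent i.ring.img_is_subring[OF A.carrier_is_subring]
  by (intro nil_kernel_hom.intro nil_kernel_hom_axioms.intro h.ring_hom_cring_axioms) auto

end

theorem corollary5p6:
  fixes A :: "('a, 'm) ring_scheme"
    and TA :: "('b, 'n) ring_scheme" and i :: "'a \<Rightarrow> 'b"
    and TAred :: "('c, 'o) ring_scheme" and j :: "'a set \<Rightarrow> 'c"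
  assumes "cring A"
    and "total_ring_of_fractions A TA i"
    and "total_ring_of_fractions (reduced_ring A) TAred j"
  shows "(\<exists>\<phi>. \<phi> \<in> ring_hom TA TAred \<and>
            (\<forall>a \<in> carrier A. \<phi> (i a) = j (nilradical A +>\<^bsub>A\<^esub> a)))
       \<and> (\<forall>\<phi>. \<phi> \<in> ring_hom TA TAred \<and>
            (\<forall>a \<in> carrier A. \<phi> (i a) = j (nilradical A +>\<^bsub>A\<^esub> a)) \<longrightarrow>
          (let C1 = class_group TA (i ` carrier A);
               C2 = class_group TAred (j ` carrier (reduced_ring A));
               C3 = class_group TAred (\<phi> ` carrier TA)
           in \<exists>f g.
                f \<in> hom C1 C2 \<and> g \<in> hom C2 C3 \<and>
                (\<forall>L \<in> invertible_ideals TA (i ` carrier A).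
                   f (ideal_class TA (i ` carrier A) L) =
                   ideal_class TAred (j ` carrier (reduced_ring A))
                     (induced_ideal TAred (j ` carrier (reduced_ring A)) \<phi> L)) \<and>
                (\<forall>L \<in> invertible_ideals TAred (j ` carrier (reduced_ring A)).
                   g (ideal_class TAred (j ` carrier (reduced_ring A)) L) =
                   ideal_class TAred (\<phi> ` carrier TA)
                     (induced_ideal TAred (\<phi> ` carrier TA) id L)) \<and>
                inj_on f (carrier C1) \<and>
                f ` carrier C1 = kernel C2 C3 g))"
proof (intro conjI allI impI)
  show "\<exists>\<phi>. \<phi> \<in> ring_hom TA TAred \<and> (\<forall>a \<in> carrier A. \<phi> (i a) = j (nilradical A +>\<^bsub>A\<^esub> a))"
    by (rule reduction_hom_exists[OF assms])
next
  fix \<phi> assume "\<phi> \<in> ring_hom TA TAred \<and> (\<forall>a \<in> carrier A. \<phi> (i a) = j (nilradical A +>\<^bsub>A\<^esub> a))"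
  then interpret reduction_of_fractions A TA i TAred j \<phi>
    using assms unfolding reduction_of_fractions_def by blast
  from class_group_exact show "let C1 = class_group TA (i ` carrier A);
      C2 = class_group TAred (j ` carrier (reduced_ring A)); C3 = class_group TAred (\<phi> ` carrier TA)
    in \<exists>f g. f \<in> hom C1 C2 \<and> g \<in> hom C2 C3 \<and>
      (\<forall>L \<in> invertible_ideals TA (i ` carrier A). f (ideal_class TA (i ` carrier A) L) =
         ideal_class TAred (j ` carrier (reduced_ring A)) (induced_ideal TAred (j ` carrier (reduced_ring A)) \<phi> L)) \<and>
      (\<forall>L \<in> invertible_ideals TAred (j ` carrier (reduced_ring A)).
         g (ideal_class TAred (j ` carrier (reduced_ring A)) L) =
         ideal_class TAred (\<phi> ` carrier TA) (induced_ideal TAred (\<phi> ` carrier TA) id L)) \<and>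
      inj_on f (carrier C1) \<and> f ` carrier C1 = kernel C2 C3 g"
    unfolding Let_def image_reduction .
qed

end
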